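(* Let $0<p<+\infty$ and let $L_p=L_p(\Omega,\mathcal{M},\mu)$ be over $\mathbb{R}$ or $\mathbb{C}$, and assume $L_p$ is infinite dimensional. Consider $S_{L_p}=\{f\in L_p:\|f\|=1\}$ with the kernel $k(f,g)=\|f-g\|$. Then $A(S_{L_p})=R(S_{L_p})=\{2^{1/p}\}$.
   Context: Here $\|f\|:=(\int_\Omega|f|^p\,d\mu)^{1/p}$ for all $0<p<\infty$ (functions equal a.e. identified); for $0<p<1$, $L_p$ is a complete metrisable topological vector space with metric $d(f,g)=\int_\Omega|f-g|^p\,d\mu$, and $S_{L_p}$ carries this topology. For a regular Borel probability measure $\nu$ on $S_{L_p}$, $U^\nu(f)=\int\|f-g\|\,d\nu(g)$ and $A(\nu):=[\inf_{S_{L_p}}U^\nu,\sup_{S_{L_p}}U^\nu]$. The average set $A(S_{L_p})$ is the intersection of $A(\nu)$ over all regular Borel probability measures $\nu$ concentrated on $S_{L_p}$, and the rendezvous set $R(S_{L_p})$ is the intersection of $A(\nu)$ over all $\nu=\frac1n\sum_{j=1}^n\delta_{w_j}$, $n\in\mathbb{N}$, $w_j\in S_{L_p}$. *)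

theory Defs
  imports "HOL-Analysis.Analysis" "HOL-Probability.Probability"
begin

text \<open>Scalar field: a type 'b of class real_normed_field + banach (by Gelfand--Mazur this is
  exactly the real or the complex numbers). Elements of L_p are represented by M-measurable
  functions 'a => 'b with integrable p-th power; a.e.-equal representatives are at
  pseudo-distance zero, so all notions below are insensitive to the choice of representatives.\<close>

definition Lp_space :: "'b::{real_normed_field,banach,second_countable_topology} itself \<Rightarrow> 'a measure \<Rightarrow> real \<Rightarrow> ('a \<Rightarrow> 'b::{real_normed_field,banach,second_countable_topology}) set" where
  "Lp_space _ M p = {f. f \<in> borel_measurable M \<and> integrable M (\<lambda>x. norm (f x) powr p)}"

definition Lp_norm :: "'a measure \<Rightarrow> real \<Rightarrow> ('a \<Rightarrow> 'b::{real_normed_field,banach,second_countable_topology}) \<Rightarrow> real" where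
  "Lp_norm M p f = (\<integral>x. norm (f x) powr p \<partial>M) powr (1 / p)"

definition Lp_sphere :: "'b::{real_normed_field,banach,second_countable_topology} itself \<Rightarrow> 'a measure \<Rightarrow> real \<Rightarrow> ('a \<Rightarrow> 'b::{real_normed_field,banach,second_countable_topology}) set" where
  "Lp_sphere B M p = {f \<in> Lp_space B M p. Lp_norm M p f = 1}"

definition Lp_infinite_dim :: "'b::{real_normed_field,banach,second_countable_topology} itself \<Rightarrow> 'a measure \<Rightarrow> real \<Rightarrow> bool" where
  "Lp_infinite_dim B M p \<longleftrightarrow>
     (\<forall>n::nat. \<exists>f :: nat \<Rightarrow> 'a \<Rightarrow> 'b.
        (\<forall>i<n. f i \<in> Lp_space B M p) \<and>
        (\<forall>c :: nat \<Rightarrow> 'b. (AE x in M. (\<Sum>i<n. c i * f i x) = 0) \<longrightarrow> (\<forall>i<n. c i = 0)))"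

text \<open>The topology of S_{L_p}: generated by the balls of the (quasi-)norm; the same topology
  as that of the metric d(f,g) = integral |f-g|^p for p<1, resp. the norm metric for p>=1.\<close>
definition Lp_sphere_top :: "'b::{real_normed_field,banach,second_countable_topology} itself \<Rightarrow> 'a measure \<Rightarrow> real \<Rightarrow> ('a \<Rightarrow> 'b::{real_normed_field,banach,second_countable_topology}) topology" where
  "Lp_sphere_top B M p = topology_generated_by
     {{g \<in> Lp_sphere B M p. Lp_norm M p (f - g) < e} | f e. f \<in> Lp_sphere B M p \<and> e > 0}"

definition regular_borel_prob :: "'b::{real_normed_field,banach,second_countable_topology} itself \<Rightarrow> 'a measure \<Rightarrow> real \<Rightarrow> ('a \<Rightarrow> 'b::{real_normed_field,banach,second_countable_topology}) measure \<Rightarrow> bool" where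
  "regular_borel_prob B M p \<nu> \<longleftrightarrow>
     prob_space \<nu> \<and> space \<nu> = Lp_sphere B M p \<and>
     sets \<nu> = sigma_sets (Lp_sphere B M p) {U. openin (Lp_sphere_top B M p) U} \<and>
     (\<forall>X \<in> sets \<nu>.
        measure \<nu> X = Sup {measure \<nu> K | K. compactin (Lp_sphere_top B M p) K \<and> K \<subseteq> X} \<and>
        measure \<nu> X = Inf {measure \<nu> U | U. openin (Lp_sphere_top B M p) U \<and> X \<subseteq> U})"

definition potential :: "'a measure \<Rightarrow> real \<Rightarrow> ('a \<Rightarrow> 'b::{real_normed_field,banach,second_countable_topology}) measure \<Rightarrow> ('a \<Rightarrow> 'b) \<Rightarrow> real" where
  "potential M p \<nu> f = (\<integral>g. Lp_norm M p (f - g) \<partial>\<nu>)"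

definition avg_interval :: "'b::{real_normed_field,banach,second_countable_topology} itself \<Rightarrow> 'a measure \<Rightarrow> real \<Rightarrow> (('a \<Rightarrow> 'b::{real_normed_field,banach,second_countable_topology}) \<Rightarrow> real) \<Rightarrow> real set" where
  "avg_interval B M p U = {Inf (U ` Lp_sphere B M p) .. Sup (U ` Lp_sphere B M p)}"

definition average_set :: "'b::{real_normed_field,banach,second_countable_topology} itself \<Rightarrow> 'a measure \<Rightarrow> real \<Rightarrow> real set" where
  "average_set B M p =
     \<Inter> {avg_interval B M p (potential M p \<nu>) | \<nu>. regular_borel_prob B M p \<nu>}"

text \<open>Rendezvous set R(S_{L_p}): nu = (1/n) sum_j delta_{w_j}; its potential is written out.\<close>
definition rendezvous_set :: "'b::{real_normed_field,banach,second_countable_topology} itself \<Rightarrow> 'a measure \<Rightarrow> real \<Rightarrow> real set" where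
  "rendezvous_set B M p =
     \<Inter> {avg_interval B M p (\<lambda>f. (\<Sum>j<n. Lp_norm M p (f - w j)) / real n) | n w.
           n \<ge> 1 \<and> (\<forall>j<n. w j \<in> Lp_sphere B M p)}"

end

theory Submission
  imports Defs
begin

(* Let w_1, ..., w_N be unit vectors of L_p with disjoint supports A_j and let g be on the unit
   sphere. The quasi-triangle inequality (x + y)^p <= (1 + eta) x^p + C_eta y^p shows that
   ||g - w_j||^p is close to ||g||^p + ||w_j||^p = 2 unless g carries a large part of its mass on
   A_j, which can happen only for few j. Hence the average of ||g - w_j|| over j is uniformly
   close to 2^(1/p) on the sphere. The uniform measure on {w_1, ..., w_N} is regular (Borel sets of
   the sphere are unions of a.e.-classes, so the class of finitely many points is compact), so the
   intervals A(nu) shrink to 2^(1/p); conversely, averaging an arbitrary potential over the w_j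
   shows that 2^(1/p) lies in every A(nu). Infinite dimensionality provides any number of
   disjoint sets that carry non-null L_p functions: otherwise L_p would be spanned a.e. by
   finitely many functions supported on atoms. *)

section \<open>A quasi-triangle inequality\<close>

lemma powr_add_le_eps:
  fixes p \<eta> :: real
  assumes p: "0 < p" and \<eta>: "0 < \<eta>"
  obtains C where "0 < C"
    "\<And>x y. 0 \<le> x \<Longrightarrow> 0 \<le> y \<Longrightarrow> (x + y) powr p \<le> (1 + \<eta>) * x powr p + C * y powr p"
proof -
  define \<delta> where "\<delta> = (1 + \<eta>) powr (1 / p) - 1"
  have \<delta>: "0 < \<delta>"
    using p \<eta> by (simp add: \<delta>_def gr_one_powr)
  have \<delta>_powr: "(1 + \<delta>) powr p = 1 + \<eta>"
    using p \<eta> by (simp add: \<delta>_def powr_powr)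
  define C where "C = (1 + 1 / \<delta>) powr p"
  have "0 < 1 + 1 / \<delta>"
    using \<delta> by (smt (verit) divide_pos_pos)
  then have "0 < C"
    by (simp add: C_def)
  moreover have "(x + y) powr p \<le> (1 + \<eta>) * x powr p + C * y powr p"
    if x: "0 \<le> x" and y: "0 \<le> y" for x y
  proof (cases "y \<le> \<delta> * x")
    case True
    have "(x + y) powr p \<le> ((1 + \<delta>) * x) powr p"
      using True x y p by (intro powr_mono2) (auto simp: algebra_simps)
    also have "\<dots> = (1 + \<eta>) * x powr p"
      using \<delta> x by (simp add: powr_mult \<delta>_powr)
    finally show ?thesis
      using \<open>0 < C\<close> by (smt (verit) mult_nonneg_nonneg powr_ge_zero)
  next
    case False
    then have "x + y \<le> (1 + 1 / \<delta>) * y"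
      using \<delta> by (simp add: field_simps)
    then have "(x + y) powr p \<le> ((1 + 1 / \<delta>) * y) powr p"
      using x y p by (intro powr_mono2) auto
    also have "\<dots> = C * y powr p"
      using \<delta> y by (simp add: powr_mult C_def)
    finally show ?thesis
      using \<eta> by (smt (verit) mult_nonneg_nonneg powr_ge_zero)
  qed
  ultimately show thesis
    using that by blast
qed

lemma norm_diff_powr_le:
  fixes a b c :: "'b::real_normed_vector"
  assumes p: "0 < p"
    and C: "\<And>x y. 0 \<le> x \<Longrightarrow> 0 \<le> y \<Longrightarrow> (x + y) powr p \<le> (1 + \<eta>) * x powr p + C * y powr p"
  shows "norm (a - b) powr p \<le> (1 + \<eta>) * norm (a - c) powr p + C * norm (c - b) powr p"
proof -
  have "norm (a - b) powr p \<le> (norm (a - c) + norm (c - b)) powr p"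
    using p norm_triangle_ineq[of "a - c" "c - b"] by (intro powr_mono2) auto
  also have "\<dots> \<le> (1 + \<eta>) * norm (a - c) powr p + C * norm (c - b) powr p"
    by (rule C) auto
  finally show ?thesis .
qed

section \<open>The p-th power integral\<close>

definition Lp_integral :: "'a measure \<Rightarrow> real \<Rightarrow> ('a \<Rightarrow> 'b::real_normed_vector) \<Rightarrow> real" where
  "Lp_integral M p f = (\<integral>x. norm (f x) powr p \<partial>M)"

lemma Lp_norm_eq_Lp_integral_powr: "Lp_norm M p f = Lp_integral M p f powr (1 / p)"
  by (simp add: Lp_norm_def Lp_integral_def)

lemma Lp_integral_nonneg: "0 \<le> Lp_integral M p f"
  unfolding Lp_integral_def by (intro integral_nonneg_AE) auto

lemma Lp_norm_nonneg: "0 \<le> Lp_norm M p f"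
  by (simp add: Lp_norm_eq_Lp_integral_powr)

lemma Lp_integral_eq_Lp_norm_powr: "0 < p \<Longrightarrow> Lp_integral M p f = Lp_norm M p f powr p"
  using Lp_integral_nonneg[of M p f] by (simp add: Lp_norm_eq_Lp_integral_powr powr_powr)

lemma Lp_integral_diff_commute: "Lp_integral M p (f - g) = Lp_integral M p (g - f)"
  by (simp add: Lp_integral_def norm_minus_commute)

lemma Lp_norm_diff_commute: "Lp_norm M p (f - g) = Lp_norm M p (g - f)"
  by (simp add: Lp_norm_def norm_minus_commute)

lemma Lp_integral_diff_self: "Lp_integral M p (f - f) = 0"
  by (simp add: Lp_integral_def)

lemma mem_Lp_sphere_iff:
  assumes p: "0 < p"
  shows "f \<in> Lp_sphere B M p \<longleftrightarrow> f \<in> Lp_space B M p \<and> Lp_integral M p f = 1"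
proof -
  have "Lp_integral M p f = (Lp_integral M p f powr (1 / p)) powr p"
    using p Lp_integral_nonneg[of M p f] by (simp add: powr_powr)
  then have "Lp_integral M p f powr (1 / p) = 1 \<longleftrightarrow> Lp_integral M p f = 1"
    by auto
  then show ?thesis
    by (simp add: Lp_sphere_def Lp_norm_eq_Lp_integral_powr)
qed

lemma integrable_indicator_mult:
  fixes f :: "'a \<Rightarrow> real"
  shows "A \<in> sets M \<Longrightarrow> integrable M f \<Longrightarrow> integrable M (\<lambda>x. indicator A x * f x)"
  using integrable_mult_indicator[of A M f] by simp

lemma integral_indicator_split:
  fixes F :: "'a \<Rightarrow> real"
  assumes "integrable M F" and "A \<in> sets M"
  shows "(\<integral>x. F x \<partial>M) = (\<integral>x. indicator A x * F x \<partial>M) + (\<integral>x. indicator (space M - A) x * F x \<partial>M)"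
proof -
  have "(\<integral>x. F x \<partial>M) = (\<integral>x. indicator A x * F x + indicator (space M - A) x * F x \<partial>M)"
    by (intro Bochner_Integration.integral_cong) (auto simp: indicator_def)
  then show ?thesis
    using assms by (simp add: integrable_indicator_mult)
qed

lemma Lp_spaceD:
  assumes "f \<in> Lp_space B M p"
  shows "f \<in> borel_measurable M" "integrable M (\<lambda>x. norm (f x) powr p)"
  using assms by (auto simp: Lp_space_def)

lemma set_integral_norm_diff_powr_le:
  assumes p: "0 < p"
    and C: "\<And>x y. 0 \<le> x \<Longrightarrow> 0 \<le> y \<Longrightarrow> (x + y) powr p \<le> (1 + \<eta>) * x powr p + C * y powr p"
    and A: "A \<in> sets M"
    and a: "integrable M (\<lambda>x. norm (a x - c x) powr p)"
    and b: "integrable M (\<lambda>x. norm (c x - b x) powr p)"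
    and ab: "integrable M (\<lambda>x. norm (a x - b x) powr p)"
  shows "(\<integral>x. indicator A x * norm (a x - b x) powr p \<partial>M) \<le>
     (1 + \<eta>) * (\<integral>x. indicator A x * norm (a x - c x) powr p \<partial>M)
       + C * (\<integral>x. indicator A x * norm (c x - b x) powr p \<partial>M)"
proof -
  have "(\<integral>x. indicator A x * norm (a x - b x) powr p \<partial>M) \<le>
     (\<integral>x. (1 + \<eta>) * (indicator A x * norm (a x - c x) powr p)
            + C * (indicator A x * norm (c x - b x) powr p) \<partial>M)"
  proof (rule integral_mono)
    show "integrable M (\<lambda>x. indicator A x * norm (a x - b x) powr p)"
      using A ab by (rule integrable_indicator_mult)
    show "integrable M (\<lambda>x. (1 + \<eta>) * (indicator A x * norm (a x - c x) powr p)
            + C * (indicator A x * norm (c x - b x) powr p))"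
      using A a b by (intro Bochner_Integration.integrable_add integrable_mult_right integrable_indicator_mult)
  qed (use norm_diff_powr_le[OF p C] in \<open>auto simp: indicator_def\<close>)
  also have "\<dots> = (1 + \<eta>) * (\<integral>x. indicator A x * norm (a x - c x) powr p \<partial>M)
       + C * (\<integral>x. indicator A x * norm (c x - b x) powr p \<partial>M)"
    using A a b by (simp add: integrable_indicator_mult)
  finally show ?thesis .
qed

lemma Lp_space_diff:
  assumes p: "0 < p" and f: "f \<in> Lp_space B M p" and g: "g \<in> Lp_space B M p"
  shows "f - g \<in> Lp_space B M p"
proof -
  obtain C where C: "\<And>x y. 0 \<le> x \<Longrightarrow> 0 \<le> y \<Longrightarrow> (x + y) powr p \<le> (1 + 1) * x powr p + C * y powr p"
    using powr_add_le_eps[OF p zero_less_one] by metis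
  have "integrable M (\<lambda>x. norm (f x - g x) powr p)"
  proof (rule Bochner_Integration.integrable_bound)
    show "integrable M (\<lambda>x. (1 + 1) * norm (f x) powr p + C * norm (g x) powr p)"
      using f g by (auto simp: Lp_space_def)
    show "AE x in M. norm (norm (f x - g x) powr p) \<le> norm ((1 + 1) * norm (f x) powr p + C * norm (g x) powr p)"
    proof (intro AE_I2)
      fix x
      have "norm (f x - g x) powr p \<le> (1 + 1) * norm (f x) powr p + C * norm (g x) powr p"
        using norm_diff_powr_le[OF p C, of "f x" "g x" 0] by simp
      then show "norm (norm (f x - g x) powr p) \<le> norm ((1 + 1) * norm (f x) powr p + C * norm (g x) powr p)"
        by (simp add: order_trans[OF _ abs_ge_self])
    qed
  qed (use Lp_spaceD(1)[OF f] Lp_spaceD(1)[OF g] in measurable)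
  moreover have "(\<lambda>x. f x - g x) \<in> borel_measurable M"
    using Lp_spaceD(1)[OF f] Lp_spaceD(1)[OF g] by measurable
  ultimately show ?thesis
    by (simp add: Lp_space_def fun_diff_def)
qed

lemma integrable_norm_diff_powr:
  "0 < p \<Longrightarrow> f \<in> Lp_space B M p \<Longrightarrow> g \<in> Lp_space B M p \<Longrightarrow> integrable M (\<lambda>x. norm (f x - g x) powr p)"
  using Lp_space_diff[of p f B M g] by (simp add: Lp_space_def)

lemma Lp_integral_diff_le:
  assumes p: "0 < p"
    and C: "\<And>x y. 0 \<le> x \<Longrightarrow> 0 \<le> y \<Longrightarrow> (x + y) powr p \<le> (1 + \<eta>) * x powr p + C * y powr p"
    and f: "f \<in> Lp_space B M p" and g: "g \<in> Lp_space B M p" and h: "h \<in> Lp_space B M p"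
  shows "Lp_integral M p (f - g) \<le> (1 + \<eta>) * Lp_integral M p (f - h) + C * Lp_integral M p (h - g)"
proof -
  have restrict: "(\<integral>x. indicator (space M) x * norm (u x - v x) powr p \<partial>M) = Lp_integral M p (u - v)" for u v
    unfolding Lp_integral_def by (rule Bochner_Integration.integral_cong) auto
  have "(\<integral>x. indicator (space M) x * norm (f x - g x) powr p \<partial>M)
      \<le> (1 + \<eta>) * (\<integral>x. indicator (space M) x * norm (f x - h x) powr p \<partial>M)
        + C * (\<integral>x. indicator (space M) x * norm (h x - g x) powr p \<partial>M)"
    by (rule set_integral_norm_diff_powr_le[OF p C sets.top integrable_norm_diff_powr[OF p f h]
          integrable_norm_diff_powr[OF p h g] integrable_norm_diff_powr[OF p f g]])
  then show ?thesis
    unfolding restrict .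
qed

lemma Lp_sphere_diff_bounded:
  assumes p: "0 < p"
  obtains Bd where
    "\<And>f g. f \<in> Lp_sphere B M p \<Longrightarrow> g \<in> Lp_sphere B M p \<Longrightarrow> Lp_integral M p (f - g) \<le> Bd"
    "\<And>f g. f \<in> Lp_sphere B M p \<Longrightarrow> g \<in> Lp_sphere B M p \<Longrightarrow> Lp_norm M p (f - g) \<le> Bd"
proof -
  obtain C where C: "\<And>x y. 0 \<le> x \<Longrightarrow> 0 \<le> y \<Longrightarrow> (x + y) powr p \<le> (1 + 1) * x powr p + C * y powr p"
    using powr_add_le_eps[OF p zero_less_one] by metis
  have zero: "(\<lambda>x. 0) \<in> Lp_space B M p"
    by (simp add: Lp_space_def)
  have int_le: "Lp_integral M p (f - g) \<le> 2 + C"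
    if "f \<in> Lp_sphere B M p" "g \<in> Lp_sphere B M p" for f g
    using Lp_integral_diff_le[OF p C _ _ zero, of f g] that
    by (simp add: mem_Lp_sphere_iff[OF p] fun_diff_def Lp_integral_def)
  have "Lp_norm M p (f - g) \<le> (2 + C) powr (1 / p)"
    if "f \<in> Lp_sphere B M p" "g \<in> Lp_sphere B M p" for f g
    unfolding Lp_norm_eq_Lp_integral_powr
    using p int_le[OF that] Lp_integral_nonneg by (intro powr_mono2) auto
  with int_le show thesis
    by (intro that[of "max (2 + C) ((2 + C) powr (1 / p))"]) (simp_all add: le_max_iff_disj)
qed

section \<open>Disjointly supported unit vectors\<close>

locale disjoint_sphere_family =
  fixes B :: "'b::{real_normed_field,banach,second_countable_topology} itself"
    and M :: "'a measure" and p :: real and N :: nat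
    and w :: "nat \<Rightarrow> 'a \<Rightarrow> 'b" and A :: "nat \<Rightarrow> 'a set"
  assumes p: "0 < p"
    and w_sphere: "\<And>j. j < N \<Longrightarrow> w j \<in> Lp_sphere B M p"
    and A_sets: "\<And>j. j < N \<Longrightarrow> A j \<in> sets M"
    and A_disjoint: "disjoint_family_on A {..<N}"
    and w_vanishes: "\<And>j x. j < N \<Longrightarrow> x \<in> space M \<Longrightarrow> x \<notin> A j \<Longrightarrow> w j x = 0"
begin

lemma sum_set_integral_le_one:
  assumes g: "g \<in> Lp_sphere B M p"
  shows "(\<Sum>j<N. \<integral>x. indicator (A j) x * norm (g x) powr p \<partial>M) \<le> 1"
proof -
  have gL: "integrable M (\<lambda>x. norm (g x) powr p)" and g1: "Lp_integral M p g = 1"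
    using g by (auto simp: mem_Lp_sphere_iff[OF p] Lp_space_def)
  have "(\<Sum>j<N. \<integral>x. indicator (A j) x * norm (g x) powr p \<partial>M)
      = (\<integral>x. (\<Sum>j<N. indicator (A j) x) * norm (g x) powr p \<partial>M)"
    unfolding sum_distrib_right
    by (rule Bochner_Integration.integral_sum[symmetric])
      (use gL A_sets in \<open>auto intro: integrable_indicator_mult\<close>)
  also have "\<dots> = (\<integral>x. indicator (\<Union>j<N. A j) x * norm (g x) powr p \<partial>M)"
    by (simp only: indicator_UN_disjoint[OF finite_lessThan A_disjoint])
  also have "\<dots> \<le> (\<integral>x. norm (g x) powr p \<partial>M)"
    using gL A_sets
    by (intro integral_mono integrable_indicator_mult) (auto simp: indicator_def)
  finally show ?thesis
    using g1 by (simp add: Lp_integral_def)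
qed

lemma set_integral_w_eq_one:
  assumes j: "j < N"
  shows "(\<integral>x. indicator (A j) x * norm (w j x) powr p \<partial>M) = 1"
proof -
  have "(\<integral>x. indicator (A j) x * norm (w j x) powr p \<partial>M) = (\<integral>x. norm (w j x) powr p \<partial>M)"
  proof (rule Bochner_Integration.integral_cong[OF refl])
    fix x
    assume "x \<in> space M"
    then show "indicator (A j) x * norm (w j x) powr p = norm (w j x) powr p"
      using w_vanishes[OF j] by (cases "x \<in> A j") auto
  qed
  then show ?thesis
    using w_sphere[OF j] by (simp add: mem_Lp_sphere_iff[OF p] Lp_integral_def)
qed

lemma Lp_integral_diff_eq_set_integral:
  assumes g: "g \<in> Lp_sphere B M p" and j: "j < N"
  shows "Lp_integral M p (g - w j) = (\<integral>x. indicator (A j) x * norm (w j x - g x) powr p \<partial>M)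
    + 1 - (\<integral>x. indicator (A j) x * norm (g x) powr p \<partial>M)"
proof -
  have gL: "g \<in> Lp_space B M p" and g1: "Lp_integral M p g = 1" and wL: "w j \<in> Lp_space B M p"
    using g w_sphere[OF j] by (auto simp: mem_Lp_sphere_iff[OF p])
  have "(\<integral>x. indicator (space M - A j) x * norm (w j x - g x) powr p \<partial>M)
      = (\<integral>x. indicator (space M - A j) x * norm (g x) powr p \<partial>M)"
  proof (rule Bochner_Integration.integral_cong[OF refl])
    fix x
    assume "x \<in> space M"
    then show "indicator (space M - A j) x * norm (w j x - g x) powr p
        = indicator (space M - A j) x * norm (g x) powr p"
      using w_vanishes[OF j] by (cases "x \<in> A j") auto
  qed
  moreover have "Lp_integral M p (g - w j) = (\<integral>x. norm (w j x - g x) powr p \<partial>M)"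
    using Lp_integral_diff_commute[of M p g "w j"] by (simp add: Lp_integral_def)
  ultimately show ?thesis
    using integral_indicator_split[OF integrable_norm_diff_powr[OF p wL gL] A_sets[OF j]]
      integral_indicator_split[OF Lp_spaceD(2)[OF gL] A_sets[OF j]] g1
    by (simp add: Lp_integral_def)
qed

lemma Lp_integral_diff_near_two:
  assumes g: "g \<in> Lp_sphere B M p" and j: "j < N" and \<eta>: "0 < \<eta>" and "0 \<le> C"
    and C: "\<And>x y. 0 \<le> x \<Longrightarrow> 0 \<le> y \<Longrightarrow> (x + y) powr p \<le> (1 + \<eta>) * x powr p + C * y powr p"
  shows "\<bar>Lp_integral M p (g - w j) - 2\<bar> \<le> \<eta> + (C + 1) * (\<integral>x. indicator (A j) x * norm (g x) powr p \<partial>M)"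
proof -
  define a where "a = (\<integral>x. indicator (A j) x * norm (g x) powr p \<partial>M)"
  define I where "I = (\<integral>x. indicator (A j) x * norm (w j x - g x) powr p \<partial>M)"
  have "0 \<le> a"
    unfolding a_def by (intro integral_nonneg_AE) auto
  have gL: "g \<in> Lp_space B M p" and wL: "w j \<in> Lp_space B M p"
    using g w_sphere[OF j] by (auto simp: mem_Lp_sphere_iff[OF p])
  note integrable = Lp_spaceD(2)[OF gL] Lp_spaceD(2)[OF wL] integrable_norm_diff_powr[OF p wL gL]
  have upper: "I \<le> (1 + \<eta>) + C * a"
    using set_integral_norm_diff_powr_le[OF p C A_sets[OF j], where a="w j" and c="\<lambda>x. 0" and b=g]
      integrable
    by (simp add: set_integral_w_eq_one[OF j] I_def a_def)
  have lower: "1 \<le> (1 + \<eta>) * I + C * a"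
    using set_integral_norm_diff_powr_le[OF p C A_sets[OF j], where a="w j" and c=g and b="\<lambda>x. 0"]
      integrable
    by (simp add: set_integral_w_eq_one[OF j] I_def a_def)
  have "1 - \<eta> - C * a \<le> I"
  proof (rule ccontr)
    assume "\<not> ?thesis"
    then have "(1 + \<eta>) * I < (1 + \<eta>) * (1 - \<eta> - C * a)"
      using \<eta> by (intro mult_strict_left_mono) auto
    also have "\<dots> \<le> 1 - C * a"
      using \<eta> \<open>0 \<le> C\<close> \<open>0 \<le> a\<close> by (simp add: algebra_simps)
    finally show False
      using lower by simp
  qed
  with upper \<open>0 \<le> a\<close> \<open>0 \<le> C\<close> show ?thesis
    unfolding Lp_integral_diff_eq_set_integral[OF g j] I_def[symmetric] a_def[symmetric]
    by (simp add: abs_le_iff algebra_simps)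
qed

end

lemma card_mult_le_sum:
  fixes a :: "nat \<Rightarrow> real" and \<delta> :: real
  assumes "\<And>j. j < N \<Longrightarrow> 0 \<le> a j"
  shows "card {j. j < N \<and> \<delta> \<le> a j} * \<delta> \<le> (\<Sum>j<N. a j)"
proof -
  have "card {j. j < N \<and> \<delta> \<le> a j} * \<delta> = (\<Sum>j\<in>{j. j < N \<and> \<delta> \<le> a j}. \<delta>)"
    by simp
  also have "\<dots> \<le> (\<Sum>j\<in>{j. j < N \<and> \<delta> \<le> a j}. a j)"
    by (intro sum_mono) simp
  also have "\<dots> \<le> (\<Sum>j<N. a j)"
    using assms by (intro sum_mono2) auto
  finally show ?thesis .
qed

lemma average_near_if_few_exceptions:
  fixes T a :: "nat \<Rightarrow> real"
  assumes N: "0 < N"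
    and a_nonneg: "\<And>j. j < N \<Longrightarrow> 0 \<le> a j" and a_sum: "(\<Sum>j<N. a j) \<le> 1"
    and \<delta>: "0 < \<delta>"
    and T_bounded: "\<And>j. j < N \<Longrightarrow> \<bar>T j - c\<bar> \<le> K"
    and T_near: "\<And>j. j < N \<Longrightarrow> a j < \<delta> \<Longrightarrow> \<bar>T j - c\<bar> \<le> e"
    and N_large: "K \<le> real N * \<delta> * e"
  shows "\<bar>(\<Sum>j<N. T j) / real N - c\<bar> \<le> 2 * e"
proof -
  define Bad where "Bad = {j. j < N \<and> \<delta> \<le> a j}"
  have Bad_sub: "Bad \<subseteq> {..<N}"
    by (auto simp: Bad_def)
  have card_Bad: "card Bad * \<delta> \<le> 1"
    using card_mult_le_sum[where a = a and N = N and \<delta> = \<delta>] a_nonneg a_sum by (simp add: Bad_def)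
  have "0 \<le> K"
    using T_bounded[OF N] by linarith
  then have "0 \<le> real N * \<delta> * e"
    using N_large by linarith
  moreover have "0 < real N * \<delta>"
    using N \<delta> by simp
  ultimately have "0 \<le> e"
    by (simp add: zero_le_mult_iff)
  have "\<bar>(\<Sum>j<N. T j) / real N - c\<bar> = \<bar>\<Sum>j<N. T j - c\<bar> / real N"
    using N by (simp add: sum_subtractf field_simps)
  also have "\<dots> \<le> (\<Sum>j<N. \<bar>T j - c\<bar>) / real N"
    by (intro divide_right_mono sum_abs) auto
  also have "\<dots> \<le> (\<Sum>j<N. e + (if j \<in> Bad then K else 0)) / real N"
  proof (intro divide_right_mono sum_mono)
    fix j
    assume "j \<in> {..<N}"
    then show "\<bar>T j - c\<bar> \<le> e + (if j \<in> Bad then K else 0)"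
      using T_bounded[of j] T_near[of j] \<open>0 \<le> K\<close> \<open>0 \<le> e\<close> by (auto simp: Bad_def)
  qed simp
  also have "\<dots> = e + card Bad * K / real N"
    using N Bad_sub by (simp add: sum.distrib sum.If_cases Int_absorb1 field_simps)
  also have "card Bad * K / real N \<le> e"
  proof -
    have "card Bad * K * \<delta> \<le> K"
      using card_Bad \<open>0 \<le> K\<close> mult_left_mono[of "card Bad * \<delta>" 1 K] by (simp add: mult_ac)
    also have "\<dots> \<le> real N * e * \<delta>"
      using N_large by (simp add: mult_ac)
    finally show ?thesis
      using \<delta> N by (simp add: field_simps)
  qed
  finally show ?thesis
    by simp
qed

lemma Lp_norm_diff_near_root_two:
  assumes p: "0 < p" and e: "0 < e"
  obtains \<delta> where "0 < \<delta>"
    "\<And>N w A g j. disjoint_sphere_family B M p N w A \<Longrightarrow> g \<in> Lp_sphere B M p \<Longrightarrow> j < N \<Longrightarrow>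
      (\<integral>x. indicator (A j) x * norm (g x) powr p \<partial>M) < \<delta> \<Longrightarrow>
      \<bar>Lp_norm M p (g - w j) - 2 powr (1 / p)\<bar> \<le> e"
proof -
  have "isCont (\<lambda>t::real. t powr (1 / p)) 2"
    by (intro continuous_intros) auto
  then obtain \<epsilon> where \<epsilon>: "0 < \<epsilon>" and cont: "\<And>t. \<bar>t - 2\<bar> < \<epsilon> \<Longrightarrow> \<bar>t powr (1 / p) - 2 powr (1 / p)\<bar> < e"
    using e unfolding continuous_at_eps_delta dist_real_def by metis
  obtain C where "0 < C"
    and C: "\<And>x y. 0 \<le> x \<Longrightarrow> 0 \<le> y \<Longrightarrow> (x + y) powr p \<le> (1 + \<epsilon> / 2) * x powr p + C * y powr p"
    using powr_add_le_eps[OF p, of "\<epsilon> / 2"] \<epsilon> by auto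
  show thesis
  proof (rule that)
    show "0 < \<epsilon> / (2 * (C + 1))"
      using \<epsilon> \<open>0 < C\<close> by simp
    fix N w A g j
    assume "disjoint_sphere_family B M p N w A" and g: "g \<in> Lp_sphere B M p" and j: "j < N"
      and small: "(\<integral>x. indicator (A j) x * norm (g x) powr p \<partial>M) < \<epsilon> / (2 * (C + 1))"
    then interpret disjoint_sphere_family B M p N w A
      by simp
    have "\<bar>Lp_integral M p (g - w j) - 2\<bar> \<le> \<epsilon> / 2 + (C + 1) * (\<integral>x. indicator (A j) x * norm (g x) powr p \<partial>M)"
      using Lp_integral_diff_near_two[OF g j _ _ C] \<epsilon> \<open>0 < C\<close> by simp
    also have "\<dots> < \<epsilon> / 2 + (C + 1) * (\<epsilon> / (2 * (C + 1)))"
      using mult_strict_left_mono[OF small, of "C + 1"] \<open>0 < C\<close> by simp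
    also have "\<dots> = \<epsilon>"
      using \<open>0 < C\<close> by (simp add: field_simps)
    finally show "\<bar>Lp_norm M p (g - w j) - 2 powr (1 / p)\<bar> \<le> e"
      using cont by (simp add: Lp_norm_eq_Lp_integral_powr less_imp_le)
  qed
qed

lemma uniform_sphere_configuration:
  assumes p: "0 < p" and families: "\<And>N. \<exists>w A. disjoint_sphere_family B M p N w A"
    and e: "0 < e"
  obtains N w where "0 < N" "\<And>j. j < N \<Longrightarrow> w j \<in> Lp_sphere B M p"
    "\<And>g. g \<in> Lp_sphere B M p \<Longrightarrow> \<bar>(\<Sum>j<N. Lp_norm M p (g - w j)) / real N - 2 powr (1 / p)\<bar> \<le> e"
proof -
  obtain \<delta> where \<delta>: "0 < \<delta>" and near: "\<And>N w A g j. disjoint_sphere_family B M p N w A \<Longrightarrow>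
      g \<in> Lp_sphere B M p \<Longrightarrow> j < N \<Longrightarrow> (\<integral>x. indicator (A j) x * norm (g x) powr p \<partial>M) < \<delta> \<Longrightarrow>
      \<bar>Lp_norm M p (g - w j) - 2 powr (1 / p)\<bar> \<le> e / 2"
    using Lp_norm_diff_near_root_two[OF p, of "e / 2"] e by auto
  obtain Bd where Bd: "\<And>f g. f \<in> Lp_sphere B M p \<Longrightarrow> g \<in> Lp_sphere B M p \<Longrightarrow> Lp_norm M p (f - g) \<le> Bd"
    using Lp_sphere_diff_bounded[OF p] by metis
  define K where "K = \<bar>Bd\<bar> + 2 powr (1 / p)"
  \<comment> \<open>At most 1 / \<delta> of the w j can be far from g; their share of the average must be at most e / 2.\<close>
  define N where "N = nat \<lceil>K / (\<delta> * (e / 2))\<rceil> + 1"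
  have "K / (\<delta> * (e / 2)) \<le> real N"
    using real_nat_ceiling_ge[of "K / (\<delta> * (e / 2))"] by (simp add: N_def)
  then have N_large: "K \<le> real N * \<delta> * (e / 2)"
    using \<delta> e by (simp add: field_simps)
  obtain w A where family: "disjoint_sphere_family B M p N w A"
    using families by blast
  then interpret disjoint_sphere_family B M p N w A .
  show thesis
  proof (rule that[OF _ w_sphere])
    show "0 < N"
      by (simp add: N_def)
    fix g
    assume g: "g \<in> Lp_sphere B M p"
    have "\<bar>(\<Sum>j<N. Lp_norm M p (g - w j)) / real N - 2 powr (1 / p)\<bar> \<le> 2 * (e / 2)"
    proof (rule average_near_if_few_exceptions[OF _ _ _ \<delta> _ near[OF family g] N_large])
      show "(\<Sum>j<N. \<integral>x. indicator (A j) x * norm (g x) powr p \<partial>M) \<le> 1"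
        by (rule sum_set_integral_le_one[OF g])
      show "\<bar>Lp_norm M p (g - w j) - 2 powr (1 / p)\<bar> \<le> K" if "j < N" for j
        using Bd[OF g w_sphere[OF that]] Lp_norm_nonneg[of M p "g - w j"] abs_ge_self[of Bd]
          powr_ge_zero[of 2 "1 / p"]
        unfolding K_def abs_le_iff by linarith
    qed (auto simp: N_def intro: integral_nonneg_AE)
    then show "\<bar>(\<Sum>j<N. Lp_norm M p (g - w j)) / real N - 2 powr (1 / p)\<bar> \<le> e"
      by simp
  qed
qed

section \<open>The rendezvous set\<close>

lemma abs_average_diff_le:
  fixes T :: "nat \<Rightarrow> real"
  assumes "0 < n" and "\<And>j. j < n \<Longrightarrow> \<bar>T j - c\<bar> \<le> e"
  shows "\<bar>(\<Sum>j<n. T j) / real n - c\<bar> \<le> e"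
proof -
  have "\<bar>(\<Sum>j<n. T j) / real n - c\<bar> = \<bar>\<Sum>j<n. T j - c\<bar> / real n"
    using assms(1) by (simp add: sum_subtractf field_simps)
  also have "\<dots> \<le> (\<Sum>j<n. \<bar>T j - c\<bar>) / real n"
    by (intro divide_right_mono sum_abs) auto
  also have "\<dots> \<le> e"
    using assms sum_bounded_above[of "{..<n}" "\<lambda>j. \<bar>T j - c\<bar>" e] by (simp add: field_simps)
  finally show ?thesis .
qed

lemma Inter_eq_singleton_if_shrinking:
  fixes c :: real
  assumes "\<And>I. I \<in> \<I> \<Longrightarrow> c \<in> I" and "\<And>e. 0 < e \<Longrightarrow> \<exists>I\<in>\<I>. I \<subseteq> {c - e .. c + e}"
  shows "\<Inter>\<I> = {c}"
proof (intro equalityI subsetI)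
  fix x
  assume x: "x \<in> \<Inter>\<I>"
  have "\<bar>x - c\<bar> \<le> 0 + e" if "0 < e" for e
    using assms(2)[OF that] x by force
  then have "\<bar>x - c\<bar> \<le> 0"
    by (rule field_le_epsilon)
  then show "x \<in> {c}"
    by simp
qed (use assms(1) in auto)

lemma Inf_Sup_image_subset_if_near:
  fixes V :: "'x \<Rightarrow> real"
  assumes "S \<noteq> {}" and "\<And>f. f \<in> S \<Longrightarrow> \<bar>V f - c\<bar> \<le> e"
  shows "{Inf (V ` S) .. Sup (V ` S)} \<subseteq> {c - e .. c + e}"
proof -
  have near: "c - e \<le> V f \<and> V f \<le> c + e" if "f \<in> S" for f
    using assms(2)[OF that] by (simp add: abs_le_iff)
  have "c - e \<le> Inf (V ` S)" and "Sup (V ` S) \<le> c + e"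
    using assms(1) near by (auto intro!: cInf_greatest cSup_least)
  then show ?thesis
    by auto
qed

lemma mem_Inf_Sup_image_if_averages_near:
  fixes V :: "'x \<Rightarrow> real"
  assumes bounded: "\<And>f. f \<in> S \<Longrightarrow> \<bar>V f\<bar> \<le> Bd"
    and averages: "\<And>e. 0 < e \<Longrightarrow> \<exists>N u. 0 < N \<and> (\<forall>k<N. u k \<in> S) \<and> \<bar>(\<Sum>k<N. V (u k)) / real N - c\<bar> \<le> e"
  shows "c \<in> {Inf (V ` S) .. Sup (V ` S)}"
proof -
  have "- Bd \<le> V f \<and> V f \<le> Bd" if "f \<in> S" for f
    using bounded[OF that] by (simp add: abs_le_iff)
  then have below: "bdd_below (V ` S)" and above: "bdd_above (V ` S)"
    by (auto intro!: bdd_belowI2[of _ "- Bd"] bdd_aboveI2[of _ _ Bd])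
  have "Inf (V ` S) \<le> c + e \<and> c \<le> Sup (V ` S) + e" if e: "0 < e" for e
  proof -
    obtain N u where N: "0 < N" and u: "\<And>k. k < N \<Longrightarrow> u k \<in> S"
      and near: "\<bar>(\<Sum>k<N. V (u k)) / real N - c\<bar> \<le> e"
      using averages[OF e] by blast
    have "real N * Inf (V ` S) \<le> (\<Sum>k<N. V (u k))"
      using sum_bounded_below[of "{..<N}" "Inf (V ` S)" "\<lambda>k. V (u k)"] u below
      by (simp add: cInf_lower)
    moreover have "(\<Sum>k<N. V (u k)) \<le> real N * Sup (V ` S)"
      using sum_bounded_above[of "{..<N}" "\<lambda>k. V (u k)" "Sup (V ` S)"] u above
      by (simp add: cSup_upper)
    ultimately have "real N * Inf (V ` S) \<le> real N * (c + e)" "real N * c \<le> real N * (Sup (V ` S) + e)"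
      using N near by (simp_all add: abs_le_iff field_simps)
    then show ?thesis
      using N by simp
  qed
  then show ?thesis
    by (auto intro: field_le_epsilon)
qed

lemma Lp_sphere_nonempty:
  assumes "\<exists>w A. disjoint_sphere_family B M p 1 w A"
  shows "Lp_sphere B M p \<noteq> {}"
proof -
  obtain w A where "disjoint_sphere_family B M p 1 w A"
    using assms by blast
  then have "w 0 \<in> Lp_sphere B M p"
    by (rule disjoint_sphere_family.w_sphere) simp
  then show ?thesis
    by blast
qed

lemma avg_interval_uniform_configuration:
  assumes p: "0 < p" and families: "\<And>N. \<exists>w A. disjoint_sphere_family B M p N w A"
    and e: "0 < e"
  obtains N w where "0 < N" "\<And>j. j < N \<Longrightarrow> w j \<in> Lp_sphere B M p"
    "avg_interval B M p (\<lambda>f. (\<Sum>j<N. Lp_norm M p (f - w j)) / real N)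
      \<subseteq> {2 powr (1 / p) - e .. 2 powr (1 / p) + e}"
proof -
  obtain N w where N: "0 < N" and w: "\<And>j. j < N \<Longrightarrow> w j \<in> Lp_sphere B M p"
    and near: "\<And>g. g \<in> Lp_sphere B M p \<Longrightarrow> \<bar>(\<Sum>j<N. Lp_norm M p (g - w j)) / real N - 2 powr (1 / p)\<bar> \<le> e"
    using uniform_sphere_configuration[OF p families e] by metis
  have "avg_interval B M p (\<lambda>f. (\<Sum>j<N. Lp_norm M p (f - w j)) / real N)
      \<subseteq> {2 powr (1 / p) - e .. 2 powr (1 / p) + e}"
    unfolding avg_interval_def by (rule Inf_Sup_image_subset_if_near[OF Lp_sphere_nonempty[OF families] near])
  then show thesis
    using that[of N w] N w by blast
qed

lemma root_two_mem_rendezvous_interval: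
  assumes p: "0 < p" and families: "\<And>N. \<exists>w A. disjoint_sphere_family B M p N w A"
    and n: "1 \<le> n" and v: "\<forall>j<n. v j \<in> Lp_sphere B M p"
  shows "2 powr (1 / p) \<in> avg_interval B M p (\<lambda>f. (\<Sum>j<n. Lp_norm M p (f - v j)) / real n)"
proof -
  obtain Bd where Bd: "\<And>f g. f \<in> Lp_sphere B M p \<Longrightarrow> g \<in> Lp_sphere B M p \<Longrightarrow> Lp_norm M p (f - g) \<le> Bd"
    using Lp_sphere_diff_bounded[OF p] by metis
  show ?thesis
    unfolding avg_interval_def
  proof (rule mem_Inf_Sup_image_if_averages_near)
    show "\<bar>(\<Sum>j<n. Lp_norm M p (f - v j)) / real n\<bar> \<le> Bd" if f: "f \<in> Lp_sphere B M p" for f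
    proof -
      have "\<bar>(\<Sum>j<n. Lp_norm M p (f - v j)) / real n - 0\<bar> \<le> Bd"
        using n by (intro abs_average_diff_le) (use v Bd[OF f] in \<open>auto simp: abs_of_nonneg Lp_norm_nonneg\<close>)
      then show ?thesis
        by simp
    qed
    fix e :: real
    assume "0 < e"
    obtain N u where N: "0 < N" and u: "\<And>j. j < N \<Longrightarrow> u j \<in> Lp_sphere B M p"
      and near: "\<And>g. g \<in> Lp_sphere B M p \<Longrightarrow> \<bar>(\<Sum>j<N. Lp_norm M p (g - u j)) / real N - 2 powr (1 / p)\<bar> \<le> e"
      using uniform_sphere_configuration[OF p families \<open>0 < e\<close>] by metis
    \<comment> \<open>Averaging the rendezvous function over the u k amounts to averaging the near-constant
      functions of the u k over the v j.\<close>
    have "(\<Sum>k<N. (\<Sum>j<n. Lp_norm M p (u k - v j)) / real n) / real N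
        = (\<Sum>j<n. (\<Sum>k<N. Lp_norm M p (v j - u k)) / real N) / real n"
      by (simp add: sum_divide_distrib[symmetric] Lp_norm_diff_commute[of M p "u _"] sum.swap[of _ "{..<N}"])
    also have "\<bar>\<dots> - 2 powr (1 / p)\<bar> \<le> e"
      by (rule abs_average_diff_le) (use n v near in auto)
    finally show "\<exists>N u. 0 < N \<and> (\<forall>k<N. u k \<in> Lp_sphere B M p) \<and>
        \<bar>(\<Sum>k<N. (\<Sum>j<n. Lp_norm M p (u k - v j)) / real n) / real N - 2 powr (1 / p)\<bar> \<le> e"
      using N u by blast
  qed
qed

lemma rendezvous_set_eq:
  assumes p: "0 < p" and families: "\<And>N. \<exists>w A. disjoint_sphere_family B M p N w A"
  shows "rendezvous_set B M p = {2 powr (1 / p)}"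
  unfolding rendezvous_set_def
proof (rule Inter_eq_singleton_if_shrinking, goal_cases)
  case (1 I)
  then show ?case
    using root_two_mem_rendezvous_interval[OF p families] by auto
next
  case (2 e)
  obtain N w where "0 < N" "\<And>j. j < N \<Longrightarrow> w j \<in> Lp_sphere B M p"
    "avg_interval B M p (\<lambda>f. (\<Sum>j<N. Lp_norm M p (f - w j)) / real N)
      \<subseteq> {2 powr (1 / p) - e .. 2 powr (1 / p) + e}"
    using avg_interval_uniform_configuration[OF p families \<open>0 < e\<close>] by metis
  then show ?case
    by (auto simp: Suc_le_eq)
qed

section \<open>Borel structure of the sphere\<close>

lemma Lp_integral_diff_eq_0_imp_AE_eq:
  assumes p: "0 < p" and f: "f \<in> Lp_space B M p" and g: "g \<in> Lp_space B M p"
    and "Lp_integral M p (f - g) = 0"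
  shows "AE x in M. f x = g x"
proof -
  have "AE x in M. norm (f x - g x) powr p = 0"
    using assms integral_nonneg_eq_0_iff_AE[OF integrable_norm_diff_powr[OF p f g]]
    by (simp add: Lp_integral_def)
  then show ?thesis
    by eventually_elim simp
qed

lemma Lp_integral_diff_cong_AE:
  assumes "f \<in> Lp_space B M p" "g \<in> Lp_space B M p" "h \<in> Lp_space B M p" and "AE x in M. g x = h x"
  shows "Lp_integral M p (f - g) = Lp_integral M p (f - h)"
  unfolding Lp_integral_def using assms
  by (intro integral_cong_AE) (auto simp: Lp_space_def elim!: eventually_mono)

definition Lp_sphere_borel :: "'b::{real_normed_field,banach,second_countable_topology} itself \<Rightarrow> 'a measure \<Rightarrow> real \<Rightarrow> ('a \<Rightarrow> 'b) measure" where
  "Lp_sphere_borel B M p = sigma (Lp_sphere B M p) {U. openin (Lp_sphere_top B M p) U}"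

text \<open>Borel sets of the sphere are unions of a.e.-classes: the topology does not separate
  a.e.-equal functions.\<close>
definition ae_saturated :: "'b::{real_normed_field,banach,second_countable_topology} itself \<Rightarrow> 'a measure \<Rightarrow> real \<Rightarrow> ('a \<Rightarrow> 'b) set \<Rightarrow> bool" where
  "ae_saturated B M p Y \<longleftrightarrow> Y \<subseteq> Lp_sphere B M p \<and>
     (\<forall>g\<in>Y. \<forall>h\<in>Lp_sphere B M p. Lp_integral M p (g - h) = 0 \<longrightarrow> h \<in> Y)"

context
  fixes B :: "'b::{real_normed_field,banach,second_countable_topology} itself"
    and M :: "'a measure" and p :: real
  assumes p: "0 < p"
begin

lemma mem_Lp_sphereD:
  assumes "f \<in> Lp_sphere B M p"
  shows "f \<in> Lp_space B M p" "Lp_integral M p f = 1"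
  using assms by (auto simp: mem_Lp_sphere_iff[OF p])

lemma topspace_Lp_sphere_top: "topspace (Lp_sphere_top B M p) = Lp_sphere B M p"
proof
  show "topspace (Lp_sphere_top B M p) \<subseteq> Lp_sphere B M p"
    unfolding Lp_sphere_top_def by auto
  show "Lp_sphere B M p \<subseteq> topspace (Lp_sphere_top B M p)"
  proof
    fix f
    assume f: "f \<in> Lp_sphere B M p"
    then have "f \<in> {g \<in> Lp_sphere B M p. Lp_norm M p (f - g) < 1}"
      using p by (simp add: Lp_norm_eq_Lp_integral_powr Lp_integral_diff_self)
    then show "f \<in> topspace (Lp_sphere_top B M p)"
      unfolding Lp_sphere_top_def topology_generated_by_topspace
      by (rule UnionI[rotated]) (use f in \<open>auto intro!: exI[of _ f] exI[of _ "1::real"]\<close>)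
  qed
qed

lemma openin_Lp_sphere_top_subset: "openin (Lp_sphere_top B M p) U \<Longrightarrow> U \<subseteq> Lp_sphere B M p"
  using openin_subset[of "Lp_sphere_top B M p" U] by (simp add: topspace_Lp_sphere_top)

lemma openin_Lp_sphere_ball:
  "f \<in> Lp_sphere B M p \<Longrightarrow> 0 < e \<Longrightarrow> openin (Lp_sphere_top B M p) {g \<in> Lp_sphere B M p. Lp_norm M p (f - g) < e}"
  unfolding Lp_sphere_top_def by (rule topology_generated_by_Basis) auto

lemma Lp_integral_diff_continuous:
  assumes e: "0 < e" and f: "f \<in> Lp_sphere B M p" and g0: "g0 \<in> Lp_sphere B M p"
  obtains r where "0 < r" "\<And>g. g \<in> Lp_sphere B M p \<Longrightarrow> Lp_norm M p (g0 - g) < r \<Longrightarrow>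
      \<bar>Lp_integral M p (f - g) - Lp_integral M p (f - g0)\<bar> < e"
proof -
  obtain Bd where Bd: "\<And>f g. f \<in> Lp_sphere B M p \<Longrightarrow> g \<in> Lp_sphere B M p \<Longrightarrow> Lp_integral M p (f - g) \<le> Bd"
    using Lp_sphere_diff_bounded[OF p] by metis
  define \<eta> where "\<eta> = e / 2 / (\<bar>Bd\<bar> + 1)"
  have \<eta>: "0 < \<eta>"
    using e by (simp add: \<eta>_def add_pos_nonneg)
  have \<eta>_Bd: "\<eta> * \<bar>Bd\<bar> < e / 2"
  proof -
    have "\<eta> * \<bar>Bd\<bar> < \<eta> * (\<bar>Bd\<bar> + 1)"
      using \<eta> by simp
    also have "\<dots> = e / 2"
      using abs_ge_zero[of Bd] unfolding \<eta>_def by (simp add: divide_simps)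
    finally show ?thesis .
  qed
  obtain C where "0 < C"
    and C: "\<And>x y. 0 \<le> x \<Longrightarrow> 0 \<le> y \<Longrightarrow> (x + y) powr p \<le> (1 + \<eta>) * x powr p + C * y powr p"
    using powr_add_le_eps[OF p \<eta>] by metis
  define r where "r = (e / (2 * C)) powr (1 / p)"
  show thesis
  proof (rule that)
    show "0 < r"
      using e \<open>0 < C\<close> by (simp add: r_def)
    fix g
    assume g: "g \<in> Lp_sphere B M p" and near: "Lp_norm M p (g0 - g) < r"
    have "Lp_integral M p (g0 - g) = Lp_norm M p (g0 - g) powr p"
      by (rule Lp_integral_eq_Lp_norm_powr[OF p])
    also have "\<dots> < r powr p"
      using near p Lp_norm_nonneg by (intro powr_less_mono2) auto
    also have "\<dots> = e / (2 * C)"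
      using e \<open>0 < C\<close> p by (simp add: r_def powr_powr)
    finally have small: "C * Lp_integral M p (g0 - g) < e / 2"
      using \<open>0 < C\<close> by (simp add: field_simps)
    note fL = mem_Lp_sphereD(1)[OF f] and gL = mem_Lp_sphereD(1)[OF g]
      and g0L = mem_Lp_sphereD(1)[OF g0]
    have "\<eta> * Lp_integral M p (f - g0) \<le> \<eta> * \<bar>Bd\<bar>" "\<eta> * Lp_integral M p (f - g) \<le> \<eta> * \<bar>Bd\<bar>"
      using Bd[OF f g0] Bd[OF f g] \<eta> by (auto intro!: mult_left_mono)
    then show "\<bar>Lp_integral M p (f - g) - Lp_integral M p (f - g0)\<bar> < e"
      using Lp_integral_diff_le[OF p C fL gL g0L] Lp_integral_diff_le[OF p C fL g0L gL]
        Lp_integral_diff_commute[of M p g g0] small \<eta>_Bd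
      by (simp add: abs_less_iff algebra_simps)
  qed
qed

lemma openin_Lp_integral_diff_preimage:
  assumes f: "f \<in> Lp_sphere B M p" and V: "open V"
  shows "openin (Lp_sphere_top B M p) {g \<in> Lp_sphere B M p. Lp_integral M p (f - g) \<in> V}"
proof (subst openin_subopen, intro ballI)
  fix g0
  assume "g0 \<in> {g \<in> Lp_sphere B M p. Lp_integral M p (f - g) \<in> V}"
  then have g0: "g0 \<in> Lp_sphere B M p" and "Lp_integral M p (f - g0) \<in> V"
    by auto
  then obtain e where e: "0 < e" and ball: "\<And>y. dist y (Lp_integral M p (f - g0)) < e \<Longrightarrow> y \<in> V"
    using V unfolding open_dist by metis
  obtain r where r: "0 < r" and cont: "\<And>g. g \<in> Lp_sphere B M p \<Longrightarrow> Lp_norm M p (g0 - g) < r \<Longrightarrow>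
      \<bar>Lp_integral M p (f - g) - Lp_integral M p (f - g0)\<bar> < e"
    using Lp_integral_diff_continuous[OF e f g0] by metis
  show "\<exists>U. openin (Lp_sphere_top B M p) U \<and> g0 \<in> U \<and> U \<subseteq> {g \<in> Lp_sphere B M p. Lp_integral M p (f - g) \<in> V}"
  proof (intro exI conjI)
    show "openin (Lp_sphere_top B M p) {g \<in> Lp_sphere B M p. Lp_norm M p (g0 - g) < r}"
      by (rule openin_Lp_sphere_ball[OF g0 r])
    show "g0 \<in> {g \<in> Lp_sphere B M p. Lp_norm M p (g0 - g) < r}"
      using g0 r p by (simp add: Lp_norm_eq_Lp_integral_powr Lp_integral_diff_self)
    show "{g \<in> Lp_sphere B M p. Lp_norm M p (g0 - g) < r} \<subseteq> {g \<in> Lp_sphere B M p. Lp_integral M p (f - g) \<in> V}"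
      using cont ball by (auto simp: dist_real_def)
  qed
qed

lemma openin_Lp_integral_diff_pos:
  assumes "finite J" and "\<And>j. j \<in> J \<Longrightarrow> v j \<in> Lp_sphere B M p"
  shows "openin (Lp_sphere_top B M p) {g \<in> Lp_sphere B M p. \<forall>j\<in>J. 0 < Lp_integral M p (v j - g)}"
proof -
  have eq: "{g \<in> Lp_sphere B M p. \<forall>j\<in>J. 0 < Lp_integral M p (v j - g)}
      = (\<Inter>j\<in>J. {g \<in> Lp_sphere B M p. Lp_integral M p (v j - g) \<in> {0<..}}) \<inter> topspace (Lp_sphere_top B M p)"
    by (auto simp: topspace_Lp_sphere_top)
  show ?thesis
    unfolding eq using assms by (intro openin_INT openin_Lp_integral_diff_preimage) auto
qed

lemma space_Lp_sphere_borel: "space (Lp_sphere_borel B M p) = Lp_sphere B M p"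
  and sets_Lp_sphere_borel:
    "sets (Lp_sphere_borel B M p) = sigma_sets (Lp_sphere B M p) {U. openin (Lp_sphere_top B M p) U}"
  unfolding Lp_sphere_borel_def using openin_Lp_sphere_top_subset
  by (auto intro!: space_measure_of sets_measure_of)

lemma Lp_integral_diff_measurable:
  assumes f: "f \<in> Lp_sphere B M p"
  shows "(\<lambda>g. Lp_integral M p (f - g)) \<in> borel_measurable (Lp_sphere_borel B M p)"
proof (rule borel_measurableI)
  fix V :: "real set"
  assume "open V"
  have "(\<lambda>g. Lp_integral M p (f - g)) -` V \<inter> space (Lp_sphere_borel B M p)
      = {g \<in> Lp_sphere B M p. Lp_integral M p (f - g) \<in> V}"
    by (auto simp: space_Lp_sphere_borel)
  also have "\<dots> \<in> sets (Lp_sphere_borel B M p)"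
    unfolding sets_Lp_sphere_borel
    using openin_Lp_integral_diff_preimage[OF f \<open>open V\<close>] by (auto intro: sigma_sets.Basic)
  finally show "(\<lambda>g. Lp_integral M p (f - g)) -` V \<inter> space (Lp_sphere_borel B M p) \<in> sets (Lp_sphere_borel B M p)" .
qed

lemma Lp_norm_diff_measurable:
  "f \<in> Lp_sphere B M p \<Longrightarrow> (\<lambda>g. Lp_norm M p (f - g)) \<in> borel_measurable (Lp_sphere_borel B M p)"
  unfolding Lp_norm_eq_Lp_integral_powr using Lp_integral_diff_measurable by measurable

lemma openin_ae_saturated:
  assumes "openin (Lp_sphere_top B M p) U"
  shows "ae_saturated B M p U"
proof -
  have "generate_topology_on
      {{g \<in> Lp_sphere B M p. Lp_norm M p (f - g) < e} | f e. f \<in> Lp_sphere B M p \<and> e > 0} U"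
    using assms unfolding Lp_sphere_top_def openin_topology_generated_by_iff .
  then show ?thesis
  proof (induction rule: generate_topology_on.induct)
    case (Basis U)
    then obtain f e where U: "U = {g \<in> Lp_sphere B M p. Lp_norm M p (f - g) < e}"
      and f: "f \<in> Lp_sphere B M p"
      by blast
    have "h \<in> U" if g: "g \<in> U" and h: "h \<in> Lp_sphere B M p" and gh: "Lp_integral M p (g - h) = 0" for g h
    proof -
      have g': "g \<in> Lp_sphere B M p"
        using g U by auto
      note gL = mem_Lp_sphereD(1)[OF g'] and hL = mem_Lp_sphereD(1)[OF h]
      have "Lp_integral M p (f - g) = Lp_integral M p (f - h)"
        by (rule Lp_integral_diff_cong_AE[OF mem_Lp_sphereD(1)[OF f] gL hL
              Lp_integral_diff_eq_0_imp_AE_eq[OF p gL hL gh]])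
      then show ?thesis
        using g h U by (simp add: Lp_norm_eq_Lp_integral_powr)
    qed
    then show ?case
      using U by (auto simp: ae_saturated_def)
  next
    case (UN K)
    then show ?case
      unfolding ae_saturated_def by blast
  qed (auto simp: ae_saturated_def)
qed

lemma sigma_sets_ae_saturated:
  assumes "X \<in> sigma_sets (Lp_sphere B M p) {U. openin (Lp_sphere_top B M p) U}"
  shows "ae_saturated B M p X"
  using assms
proof (induction rule: sigma_sets.induct)
  case (Basic X)
  then show ?case
    by (simp add: openin_ae_saturated)
next
  case (Compl X)
  have "h \<notin> X" if "g \<in> Lp_sphere B M p - X" "h \<in> Lp_sphere B M p" "Lp_integral M p (g - h) = 0" for g h
    using Compl.IH that Lp_integral_diff_commute[of M p g h] by (auto simp: ae_saturated_def)
  then show ?case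
    by (auto simp: ae_saturated_def)
next
  case (Union X)
  then show ?case
    unfolding ae_saturated_def by blast
qed (simp add: ae_saturated_def)

end

lemma ae_saturated_Lp_integral_diff_pos:
  assumes "ae_saturated B M p X" and "g \<in> X" and "h \<in> Lp_sphere B M p" and "h \<notin> X"
  shows "0 < Lp_integral M p (h - g)"
proof -
  have "Lp_integral M p (g - h) \<noteq> 0"
    using assms unfolding ae_saturated_def by blast
  then show ?thesis
    using Lp_integral_nonneg[of M p "h - g"] Lp_integral_diff_commute[of M p g h] by simp
qed

section \<open>The average set\<close>

definition uniform_sphere_measure :: "'b::{real_normed_field,banach,second_countable_topology} itself \<Rightarrow> 'a measure \<Rightarrow> real \<Rightarrow> nat \<Rightarrow> (nat \<Rightarrow> 'a \<Rightarrow> 'b) \<Rightarrow> ('a \<Rightarrow> 'b) measure" where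
  "uniform_sphere_measure B M p N w = distr (uniform_count_measure {..<N}) (Lp_sphere_borel B M p) w"

context
  fixes B :: "'b::{real_normed_field,banach,second_countable_topology} itself"
    and M :: "'a measure" and p :: real and N :: nat and w :: "nat \<Rightarrow> 'a \<Rightarrow> 'b"
  assumes p: "0 < p" and N: "0 < N" and w: "\<And>j. j < N \<Longrightarrow> w j \<in> Lp_sphere B M p"
begin

lemma measurable_sphere_points: "w \<in> measurable (uniform_count_measure {..<N}) (Lp_sphere_borel B M p)"
proof -
  have "w \<in> measurable (count_space {..<N}) (Lp_sphere_borel B M p)"
    using w by (simp add: space_Lp_sphere_borel[OF p] Pi_iff)
  then show ?thesis
    by (subst measurable_cong_sets[OF sets_uniform_count_measure_count_space refl])
qed

lemma prob_space_uniform_sphere_measure: "prob_space (uniform_sphere_measure B M p N w)"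
proof -
  have "{..<N} \<noteq> {}"
    using N by auto
  then interpret prob_space "uniform_count_measure {..<N}"
    by (intro prob_space_uniform_count_measure) auto
  show ?thesis
    unfolding uniform_sphere_measure_def by (rule prob_space_distr[OF measurable_sphere_points])
qed

lemma potential_uniform_sphere_measure:
  assumes f: "f \<in> Lp_sphere B M p"
  shows "potential M p (uniform_sphere_measure B M p N w) f = (\<Sum>j<N. Lp_norm M p (f - w j)) / real N"
  unfolding potential_def uniform_sphere_measure_def
  by (simp add: integral_distr[OF measurable_sphere_points Lp_norm_diff_measurable[OF p f]]
      integral_uniform_count_measure)

lemma measure_uniform_sphere_measure_cong:
  assumes "X \<in> sets (Lp_sphere_borel B M p)" "Y \<in> sets (Lp_sphere_borel B M p)"
    and "\<And>j. j < N \<Longrightarrow> w j \<in> X \<longleftrightarrow> w j \<in> Y"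
  shows "measure (uniform_sphere_measure B M p N w) X = measure (uniform_sphere_measure B M p N w) Y"
proof -
  have "w -` X \<inter> space (uniform_count_measure {..<N}) = w -` Y \<inter> space (uniform_count_measure {..<N})"
    using assms(3) by (auto simp: space_uniform_count_measure)
  then show ?thesis
    unfolding uniform_sphere_measure_def
    by (simp add: measure_distr[OF measurable_sphere_points assms(1)] measure_distr[OF measurable_sphere_points assms(2)])
qed

text \<open>The a.e.-class of finitely many sphere points is compact, since every open set containing
  a point contains its whole class.\<close>
lemma compactin_ae_class:
  "compactin (Lp_sphere_top B M p) {g \<in> Lp_sphere B M p. \<exists>j\<in>J. j < N \<and> Lp_integral M p (w j - g) = 0}"
  (is "compactin _ ?K")
  unfolding compactin_def
proof (intro conjI allI impI)
  show "?K \<subseteq> topspace (Lp_sphere_top B M p)"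
    by (auto simp: topspace_Lp_sphere_top[OF p])
  fix \<U>
  assume "(\<forall>U\<in>\<U>. openin (Lp_sphere_top B M p) U) \<and> ?K \<subseteq> \<Union>\<U>"
  then have opens: "\<And>U. U \<in> \<U> \<Longrightarrow> openin (Lp_sphere_top B M p) U" and cover: "?K \<subseteq> \<Union>\<U>"
    by auto
  define J' where "J' = {j \<in> J. j < N}"
  have "w j \<in> ?K" if "j \<in> J'" for j
    using that w p by (auto simp: J'_def Lp_integral_diff_self)
  then have "w j \<in> \<Union>\<U>" if "j \<in> J'" for j
    using that cover by blast
  then have "\<forall>j\<in>J'. \<exists>U\<in>\<U>. w j \<in> U"
    by blast
  then obtain u where u: "\<forall>j\<in>J'. u j \<in> \<U> \<and> w j \<in> u j"
    by metis
  have "g \<in> \<Union> (u ` J')" if "g \<in> ?K" for g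
  proof -
    obtain j where j: "j \<in> J'" and g: "g \<in> Lp_sphere B M p" "Lp_integral M p (w j - g) = 0"
      using \<open>g \<in> ?K\<close> by (auto simp: J'_def)
    have "ae_saturated B M p (u j)"
      using u j by (intro openin_ae_saturated[OF p] opens) simp
    then have "g \<in> u j"
      using u j g unfolding ae_saturated_def by blast
    then show ?thesis
      using j by blast
  qed
  moreover have "finite (u ` J')" "u ` J' \<subseteq> \<U>"
    using u by (auto simp: J'_def)
  ultimately show "\<exists>\<F>. finite \<F> \<and> \<F> \<subseteq> \<U> \<and> ?K \<subseteq> \<Union>\<F>"
    by (intro exI[of _ "u ` J'"]) auto
qed

lemma uniform_sphere_measure_inner_regular:
  assumes X: "X \<in> sets (Lp_sphere_borel B M p)"
  shows "measure (uniform_sphere_measure B M p N w) X =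
    Sup {measure (uniform_sphere_measure B M p N w) K | K. compactin (Lp_sphere_top B M p) K \<and> K \<subseteq> X}"
proof -
  interpret prob_space "uniform_sphere_measure B M p N w"
    by (rule prob_space_uniform_sphere_measure)
  have sat: "ae_saturated B M p X"
    using X sigma_sets_ae_saturated[OF p] by (simp add: sets_Lp_sphere_borel[OF p])
  define J where "J = {j. j < N \<and> w j \<in> X}"
  define K where "K = {g \<in> Lp_sphere B M p. \<exists>j\<in>J. j < N \<and> Lp_integral M p (w j - g) = 0}"
  have K_sets: "K \<in> sets (Lp_sphere_borel B M p)"
  proof -
    have "K = (\<Union>j\<in>J. (\<lambda>g. Lp_integral M p (w j - g)) -` {0} \<inter> space (Lp_sphere_borel B M p))"
      by (auto simp: K_def J_def space_Lp_sphere_borel[OF p])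
    also have "\<dots> \<in> sets (Lp_sphere_borel B M p)"
      using w by (intro sets.finite_UN measurable_sets[OF Lp_integral_diff_measurable[OF p]])
        (auto simp: J_def)
    finally show ?thesis .
  qed
  have "K \<subseteq> X"
    using sat by (auto simp: K_def J_def ae_saturated_def)
  have "measure (uniform_sphere_measure B M p N w) K = measure (uniform_sphere_measure B M p N w) X"
    using \<open>K \<subseteq> X\<close> w p
    by (intro measure_uniform_sphere_measure_cong[OF K_sets X])
      (auto simp: K_def J_def Lp_integral_diff_self)
  moreover have "compactin (Lp_sphere_top B M p) K"
    unfolding K_def by (rule compactin_ae_class)
  moreover have "measure (uniform_sphere_measure B M p N w) K' \<le> measure (uniform_sphere_measure B M p N w) X"
    if "K' \<subseteq> X" for K'
    using finite_measure_mono[OF that] X by (simp add: uniform_sphere_measure_def)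
  ultimately show ?thesis
    using \<open>K \<subseteq> X\<close> by (intro cSup_eq_maximum[symmetric]) (auto intro!: exI[of _ K])
qed

lemma uniform_sphere_measure_outer_regular:
  assumes X: "X \<in> sets (Lp_sphere_borel B M p)"
  shows "measure (uniform_sphere_measure B M p N w) X =
    Inf {measure (uniform_sphere_measure B M p N w) U | U. openin (Lp_sphere_top B M p) U \<and> X \<subseteq> U}"
proof -
  interpret prob_space "uniform_sphere_measure B M p N w"
    by (rule prob_space_uniform_sphere_measure)
  have sat: "ae_saturated B M p X"
    using X sigma_sets_ae_saturated[OF p] by (simp add: sets_Lp_sphere_borel[OF p])
  define J where "J = {j. j < N \<and> w j \<notin> X}"
  define U where "U = {g \<in> Lp_sphere B M p. \<forall>j\<in>J. 0 < Lp_integral M p (w j - g)}"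
  have U_open: "openin (Lp_sphere_top B M p) U"
    unfolding U_def using w by (intro openin_Lp_integral_diff_pos[OF p]) (auto simp: J_def)
  then have U_sets: "U \<in> sets (Lp_sphere_borel B M p)"
    by (auto simp: sets_Lp_sphere_borel[OF p])
  have "X \<subseteq> U"
  proof
    fix g
    assume g: "g \<in> X"
    then have "g \<in> Lp_sphere B M p"
      using sat by (auto simp: ae_saturated_def)
    moreover have "0 < Lp_integral M p (w j - g)" if "j \<in> J" for j
      using that w by (intro ae_saturated_Lp_integral_diff_pos[OF sat g]) (auto simp: J_def)
    ultimately show "g \<in> U"
      by (simp add: U_def)
  qed
  have "w j \<in> U \<longleftrightarrow> w j \<in> X" if "j < N" for j
  proof
    assume "w j \<in> U"
    show "w j \<in> X"
    proof (rule ccontr)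
      assume "w j \<notin> X"
      then have "j \<in> J"
        using that by (simp add: J_def)
      then have "0 < Lp_integral M p (w j - w j)"
        using \<open>w j \<in> U\<close> by (auto simp: U_def)
      then show False
        using p by (simp add: Lp_integral_diff_self)
    qed
  qed (use \<open>X \<subseteq> U\<close> in blast)
  then have "measure (uniform_sphere_measure B M p N w) U = measure (uniform_sphere_measure B M p N w) X"
    by (rule measure_uniform_sphere_measure_cong[OF U_sets X])
  moreover have "measure (uniform_sphere_measure B M p N w) X \<le> measure (uniform_sphere_measure B M p N w) U'"
    if "openin (Lp_sphere_top B M p) U'" "X \<subseteq> U'" for U'
    using finite_measure_mono[OF that(2)] that(1)
    by (simp add: uniform_sphere_measure_def sets_Lp_sphere_borel[OF p] sigma_sets.Basic)
  ultimately show ?thesis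
    using U_open \<open>X \<subseteq> U\<close> by (intro cInf_eq_minimum[symmetric]) (auto intro!: exI[of _ U])
qed

lemma regular_borel_prob_uniform_sphere_measure: "regular_borel_prob B M p (uniform_sphere_measure B M p N w)"
  unfolding regular_borel_prob_def
  using prob_space_uniform_sphere_measure uniform_sphere_measure_inner_regular
    uniform_sphere_measure_outer_regular
  by (simp add: uniform_sphere_measure_def space_Lp_sphere_borel[OF p] sets_Lp_sphere_borel[OF p])

end

lemma integrable_Lp_norm_diff:
  assumes p: "0 < p" and \<nu>: "regular_borel_prob B M p \<nu>" and f: "f \<in> Lp_sphere B M p"
  shows "integrable \<nu> (\<lambda>g. Lp_norm M p (f - g))"
proof -
  obtain Bd where Bd: "\<And>g. g \<in> Lp_sphere B M p \<Longrightarrow> Lp_norm M p (f - g) \<le> Bd"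
    using Lp_sphere_diff_bounded[OF p] f by metis
  interpret prob_space \<nu>
    using \<nu> by (simp add: regular_borel_prob_def)
  have space: "space \<nu> = Lp_sphere B M p" and sets: "sets \<nu> = sets (Lp_sphere_borel B M p)"
    using \<nu> by (simp_all add: regular_borel_prob_def sets_Lp_sphere_borel[OF p])
  have "(\<lambda>g. Lp_norm M p (f - g)) \<in> borel_measurable \<nu>"
    using Lp_norm_diff_measurable[OF p f] by (simp add: measurable_cong_sets[OF sets refl])
  then show ?thesis
    using Bd space by (intro integrable_const_bound[where B = Bd] AE_I2) (auto simp: abs_of_nonneg Lp_norm_nonneg)
qed

lemma abs_potential_le:
  assumes p: "0 < p" and \<nu>: "regular_borel_prob B M p \<nu>" and f: "f \<in> Lp_sphere B M p"
    and Bd: "\<And>g. g \<in> Lp_sphere B M p \<Longrightarrow> Lp_norm M p (f - g) \<le> Bd"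
  shows "\<bar>potential M p \<nu> f\<bar> \<le> Bd"
proof -
  interpret prob_space \<nu>
    using \<nu> by (simp add: regular_borel_prob_def)
  have "0 \<le> potential M p \<nu> f"
    unfolding potential_def by (intro integral_nonneg_AE AE_I2 Lp_norm_nonneg)
  moreover have "potential M p \<nu> f \<le> Bd"
    unfolding potential_def using Bd \<nu>
    by (intro integral_le_const[OF integrable_Lp_norm_diff[OF p \<nu> f]] AE_I2) (auto simp: regular_borel_prob_def)
  ultimately show ?thesis
    by simp
qed

lemma root_two_mem_potential_interval:
  assumes p: "0 < p" and families: "\<And>N. \<exists>w A. disjoint_sphere_family B M p N w A"
    and \<nu>: "regular_borel_prob B M p \<nu>"
  shows "2 powr (1 / p) \<in> avg_interval B M p (potential M p \<nu>)"
proof -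
  interpret prob_space \<nu>
    using \<nu> by (simp add: regular_borel_prob_def)
  have space: "space \<nu> = Lp_sphere B M p"
    using \<nu> by (simp add: regular_borel_prob_def)
  note integrable = integrable_Lp_norm_diff[OF p \<nu>]
  obtain Bd where Bd: "\<And>f g. f \<in> Lp_sphere B M p \<Longrightarrow> g \<in> Lp_sphere B M p \<Longrightarrow> Lp_norm M p (f - g) \<le> Bd"
    using Lp_sphere_diff_bounded[OF p] by metis
  show ?thesis
    unfolding avg_interval_def
  proof (rule mem_Inf_Sup_image_if_averages_near)
    show "\<bar>potential M p \<nu> f\<bar> \<le> Bd" if f: "f \<in> Lp_sphere B M p" for f
      using Bd[OF f] by (rule abs_potential_le[OF p \<nu> f])
    fix e :: real
    assume "0 < e"
    obtain N u where N: "0 < N" and u: "\<And>j. j < N \<Longrightarrow> u j \<in> Lp_sphere B M p"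
      and near: "\<And>g. g \<in> Lp_sphere B M p \<Longrightarrow> \<bar>(\<Sum>j<N. Lp_norm M p (g - u j)) / real N - 2 powr (1 / p)\<bar> \<le> e"
      using uniform_sphere_configuration[OF p families \<open>0 < e\<close>] by metis
    have near': "\<bar>(\<Sum>j<N. Lp_norm M p (u j - g)) / real N - 2 powr (1 / p)\<bar> \<le> e" if "g \<in> space \<nu>" for g
      using near[of g] that space by (simp add: Lp_norm_diff_commute[of M p "u _"])
    have int_avg: "integrable \<nu> (\<lambda>g. (\<Sum>j<N. Lp_norm M p (u j - g)) / real N)"
      using integrable u by (intro integrable_divide Bochner_Integration.integrable_sum) auto
    have "(\<Sum>j<N. potential M p \<nu> (u j)) / real N = (\<integral>g. (\<Sum>j<N. Lp_norm M p (u j - g)) / real N \<partial>\<nu>)"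
      unfolding potential_def using integrable u by (simp add: Bochner_Integration.integral_sum)
    also have "\<bar>\<dots> - 2 powr (1 / p)\<bar> \<le> e"
    proof -
      have "2 powr (1 / p) - e \<le> (\<integral>g. (\<Sum>j<N. Lp_norm M p (u j - g)) / real N \<partial>\<nu>)"
        by (intro integral_ge_const[OF int_avg] AE_I2) (auto dest!: near' simp: abs_le_iff)
      moreover have "(\<integral>g. (\<Sum>j<N. Lp_norm M p (u j - g)) / real N \<partial>\<nu>) \<le> 2 powr (1 / p) + e"
        by (intro integral_le_const[OF int_avg] AE_I2) (auto dest!: near' simp: abs_le_iff)
      ultimately show ?thesis
        by simp
    qed
    finally show "\<exists>N u. 0 < N \<and> (\<forall>j<N. u j \<in> Lp_sphere B M p) \<and>
        \<bar>(\<Sum>j<N. potential M p \<nu> (u j)) / real N - 2 powr (1 / p)\<bar> \<le> e"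
      using N u by blast
  qed
qed

lemma avg_interval_cong:
  "(\<And>f. f \<in> Lp_sphere B M p \<Longrightarrow> U f = V f) \<Longrightarrow> avg_interval B M p U = avg_interval B M p V"
  by (simp add: avg_interval_def cong: image_cong)

lemma average_set_eq:
  assumes p: "0 < p" and families: "\<And>N. \<exists>w A. disjoint_sphere_family B M p N w A"
  shows "average_set B M p = {2 powr (1 / p)}"
  unfolding average_set_def
proof (rule Inter_eq_singleton_if_shrinking, goal_cases)
  case (1 I)
  then show ?case
    using root_two_mem_potential_interval[OF p families] by auto
next
  case (2 e)
  obtain N w where N: "0 < N" and w: "\<And>j. j < N \<Longrightarrow> w j \<in> Lp_sphere B M p"
    and shrinks: "avg_interval B M p (\<lambda>f. (\<Sum>j<N. Lp_norm M p (f - w j)) / real N)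
      \<subseteq> {2 powr (1 / p) - e .. 2 powr (1 / p) + e}"
    using avg_interval_uniform_configuration[OF p families \<open>0 < e\<close>] by metis
  have "avg_interval B M p (potential M p (uniform_sphere_measure B M p N w))
      = avg_interval B M p (\<lambda>f. (\<Sum>j<N. Lp_norm M p (f - w j)) / real N)"
    by (rule avg_interval_cong) (rule potential_uniform_sphere_measure[where w = w, OF p N w])
  then show ?case
    using shrinks regular_borel_prob_uniform_sphere_measure[where w = w, OF p N w] by auto
qed

section \<open>Disjoint non-negligible sets\<close>

lemma sum_eliminate_unknown:
  fixes c :: "'r \<Rightarrow> nat \<Rightarrow> 'b::field"
  assumes "finite R" and "m0 \<in> R"
  shows "(\<Sum>m\<in>R. (if m = m0 then - (\<Sum>m'\<in>R - {m0}. d m' * c m' k) / c m0 k else d m) * c m i)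
    = (\<Sum>m\<in>R - {m0}. d m * (c m i - c m k / c m0 k * c m0 i))"
proof -
  have "(\<Sum>m\<in>R. (if m = m0 then - (\<Sum>m'\<in>R - {m0}. d m' * c m' k) / c m0 k else d m) * c m i)
      = - (\<Sum>m'\<in>R - {m0}. d m' * c m' k) / c m0 k * c m0 i + (\<Sum>m\<in>R - {m0}. d m * c m i)"
    using assms by (simp add: sum.remove)
  also have "- (\<Sum>m'\<in>R - {m0}. d m' * c m' k) / c m0 k * c m0 i
      = - (\<Sum>m\<in>R - {m0}. d m * (c m k / c m0 k * c m0 i))"
    by (simp add: sum_distrib_right sum_divide_distrib mult.assoc)
  finally show ?thesis
    by (simp add: right_diff_distrib sum_subtractf)
qed

lemma homogeneous_system_nontrivial_solution:
  fixes c :: "'r \<Rightarrow> nat \<Rightarrow> 'b::field"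
  assumes "finite R" and "K < card R"
  shows "\<exists>d. (\<exists>m\<in>R. d m \<noteq> 0) \<and> (\<forall>i<K. (\<Sum>m\<in>R. d m * c m i) = 0)"
  using assms
proof (induction K arbitrary: R c)
  case 0
  then obtain m0 where "m0 \<in> R"
    by fastforce
  then show ?case
    by (intro exI[of _ "\<lambda>_. 1"]) auto
next
  case (Suc K)
  show ?case
  proof (cases "\<forall>m\<in>R. c m K = 0")
    case True
    obtain d where d: "\<exists>m\<in>R. d m \<noteq> 0" "\<forall>i<K. (\<Sum>m\<in>R. d m * c m i) = 0"
      using Suc.IH[of R c] Suc.prems by auto
    then show ?thesis
      using True by (intro exI[of _ d]) (auto simp: less_Suc_eq)
  next
    case False
    then obtain m0 where m0: "m0 \<in> R" "c m0 K \<noteq> 0"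
      by auto
    \<comment> \<open>Eliminate the unknown m0 using equation K, then solve the remaining K equations.\<close>
    define R' where "R' = R - {m0}"
    define c' where "c' m i = c m i - (c m K / c m0 K) * c m0 i" for m i
    have "finite R'" "K < card R'"
      using Suc.prems m0 by (auto simp: R'_def)
    then obtain d' where d': "\<exists>m\<in>R'. d' m \<noteq> 0" "\<forall>i<K. (\<Sum>m\<in>R'. d' m * c' m i) = 0"
      using Suc.IH[of R' c'] by blast
    define d where "d m = (if m = m0 then - (\<Sum>m'\<in>R'. d' m' * c m' K) / c m0 K else d' m)" for m
    have eq: "(\<Sum>m\<in>R. d m * c m i) = (\<Sum>m\<in>R'. d' m * c' m i)" for i
      unfolding d_def c'_def R'_def by (rule sum_eliminate_unknown[OF Suc.prems(1) m0(1)])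
    show ?thesis
    proof (intro exI[of _ d] conjI allI impI)
      show "\<exists>m\<in>R. d m \<noteq> 0"
        using d'(1) by (auto simp: d_def R'_def)
      fix i
      assume "i < Suc K"
      then show "(\<Sum>m\<in>R. d m * c m i) = 0"
        using eq d'(2) m0(2) by (cases "i = K") (auto simp: c'_def)
    qed
  qed
qed

definition Lp_negligible :: "'b::{real_normed_field,banach,second_countable_topology} itself \<Rightarrow> 'a measure \<Rightarrow> real \<Rightarrow> 'a set \<Rightarrow> bool" where
  "Lp_negligible B M p A \<longleftrightarrow> (\<forall>f\<in>Lp_space B M p. AE x in M. x \<in> A \<longrightarrow> f x = 0)"

lemma Lp_negligible_null_sets:
  assumes "Lp_negligible B M p A" and "\<phi> \<in> Lp_space B M p" and "E \<in> sets M" and "E \<subseteq> A"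
    and "\<And>x. x \<in> E \<Longrightarrow> \<phi> x \<noteq> 0"
  shows "E \<in> null_sets M"
proof -
  have "AE x in M. x \<in> A \<longrightarrow> \<phi> x = 0"
    using assms(1,2) by (simp add: Lp_negligible_def)
  then have "AE x in M. x \<notin> E"
    using assms(4,5) by (auto elim: eventually_mono)
  then show ?thesis
    using AE_iff_null_sets[OF assms(3)] by simp
qed

lemma eq_if_in_shrinking_balls:
  fixes x y :: "'b::metric_space"
  assumes "\<And>n. x \<in> ball (d n) (1 / real (Suc n))" and "\<And>n. y \<in> ball (d n) (1 / real (Suc n))"
  shows "x = y"
proof (rule ccontr)
  assume "x \<noteq> y"
  then obtain n where n: "inverse (real (Suc n)) < dist x y / 2"
    using reals_Archimedean[of "dist x y / 2"] by auto
  have "dist x y \<le> dist x (d n) + dist (d n) y"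
    by (rule dist_triangle)
  also have "\<dots> < 1 / real (Suc n) + 1 / real (Suc n)"
    using assms[of n] by (intro add_strict_mono) (auto simp: dist_commute)
  finally show False
    using n by (simp add: field_simps)
qed

lemma exists_ball_not_null:
  fixes h :: "'a \<Rightarrow> 'b::{metric_space,second_countable_topology}"
  assumes S: "S \<notin> null_sets M" and r: "0 < r"
  shows "\<exists>y. {x \<in> S. h x \<in> ball y r} \<notin> null_sets M"
proof (rule ccontr)
  obtain D :: "'b set" where D: "countable D" "\<And>X. open X \<Longrightarrow> X \<noteq> {} \<Longrightarrow> \<exists>d\<in>D. d \<in> X"
    using countable_dense_setE by blast
  assume "\<not> ?thesis"
  then have "(\<Union>d\<in>D. {x \<in> S. h x \<in> ball d r}) \<in> null_sets M"
    using D(1) by (intro null_sets_UN') auto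
  moreover have "S = (\<Union>d\<in>D. {x \<in> S. h x \<in> ball d r})"
  proof (intro equalityI subsetI)
    fix x
    assume "x \<in> S"
    moreover obtain d where "d \<in> D" "d \<in> ball (h x) r"
      using D(2)[of "ball (h x) r"] r by auto
    ultimately show "x \<in> (\<Union>d\<in>D. {x \<in> S. h x \<in> ball d r})"
      by (auto simp: dist_commute)
  qed auto
  ultimately show False
    using S by simp
qed

lemma AE_eq_const_if_balls_trivial:
  fixes h :: "'a \<Rightarrow> 'b::{metric_space,second_countable_topology}"
  assumes h: "h \<in> borel_measurable M" and S: "S \<in> sets M"
    and trivial: "\<And>y r. 0 < r \<Longrightarrow>
      {x \<in> S. h x \<in> ball y r} \<in> null_sets M \<or> {x \<in> S. h x \<notin> ball y r} \<in> null_sets M"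
  shows "\<exists>c. AE x in M. x \<in> S \<longrightarrow> h x = c"
proof (cases "S \<in> null_sets M")
  case True
  then show ?thesis
    using AE_not_in[OF True] by (auto elim: eventually_mono)
next
  case False
  define r where "r n = 1 / real (Suc n)" for n
  have r: "0 < r n" for n
    by (simp add: r_def)
  \<comment> \<open>By the dichotomy, a non-null ball of radius r n contains h on almost all of S.\<close>
  have "\<forall>n. \<exists>y. {x \<in> S. h x \<in> ball y (r n)} \<notin> null_sets M"
    using exists_ball_not_null[OF False r] by blast
  then obtain d where d: "\<And>n. {x \<in> S. h x \<in> ball (d n) (r n)} \<notin> null_sets M"
    by (metis choice)
  have "{x \<in> S. h x \<notin> ball (d n) (r n)} \<in> null_sets M" for n
    using trivial[OF r, of "d n" n] d[of n] by blast
  then have "\<And>n. AE x in M. x \<notin> {x \<in> S. h x \<notin> ball (d n) (r n)}"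
    by (rule AE_not_in)
  then have "AE x in M. \<forall>n. x \<notin> {x \<in> S. h x \<notin> ball (d n) (r n)}"
    unfolding AE_all_countable by blast
  then have in_balls: "AE x in M. x \<in> S \<longrightarrow> (\<forall>n. h x \<in> ball (d n) (r n))"
    by (auto elim: eventually_mono)
  obtain x0 where x0: "x0 \<in> S" "\<And>n. h x0 \<in> ball (d n) (r n)"
  proof (rule ccontr)
    assume "\<not> thesis"
    then have "\<forall>x\<in>S. \<not> (\<forall>n. h x \<in> ball (d n) (r n))"
      using that by blast
    with in_balls have "AE x in M. x \<notin> S"
      by (auto elim!: eventually_mono)
    then show False
      using False AE_iff_null_sets[OF S] by simp
  qed
  have "h x = h x0" if "\<forall>n. h x \<in> ball (d n) (r n)" for x
    using that x0(2) unfolding r_def by (intro eq_if_in_shrinking_balls[where d = d]) auto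
  with in_balls have "AE x in M. x \<in> S \<longrightarrow> h x = h x0"
    by (auto elim!: eventually_mono)
  then show ?thesis
    by blast
qed

lemma AE_eq_const_on_atom:
  fixes h :: "'a \<Rightarrow> 'c::{metric_space,second_countable_topology}"
  assumes h: "h \<in> borel_measurable M" and S: "S \<in> sets M" and "S \<subseteq> D"
    and \<phi>: "\<phi> \<in> Lp_space B M p" and \<phi>_nonzero: "\<And>x. x \<in> S \<Longrightarrow> \<phi> x \<noteq> 0"
    and atom: "\<And>E. E \<in> sets M \<Longrightarrow> E \<subseteq> D \<Longrightarrow> Lp_negligible B M p E \<or> Lp_negligible B M p (D - E)"
  shows "\<exists>c. AE x in M. x \<in> S \<longrightarrow> h x = c"
proof (rule AE_eq_const_if_balls_trivial[OF h S])
  fix y :: 'c and r :: real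
  define E where "E = {x \<in> S. h x \<in> ball y r}"
  have "E = S \<inter> (h -` ball y r \<inter> space M)"
    using sets.sets_into_space[OF S] by (auto simp: E_def)
  then have E: "E \<in> sets M"
    using S h by auto
  have "E \<subseteq> D"
    using \<open>S \<subseteq> D\<close> by (auto simp: E_def)
  \<comment> \<open>\<phi> does not vanish on S, so a negligible part of S is a null set.\<close>
  from atom[OF E this] show "{x \<in> S. h x \<in> ball y r} \<in> null_sets M \<or> {x \<in> S. h x \<notin> ball y r} \<in> null_sets M"
  proof
    assume "Lp_negligible B M p E"
    then have "E \<in> null_sets M"
      by (rule Lp_negligible_null_sets[OF _ \<phi> E subset_refl]) (auto simp: E_def \<phi>_nonzero)
    then show ?thesis
      by (simp add: E_def)
  next
    assume negl: "Lp_negligible B M p (D - E)"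
    have "{x \<in> S. h x \<notin> ball y r} = S - E"
      by (auto simp: E_def)
    then have "{x \<in> S. h x \<notin> ball y r} \<in> null_sets M"
      using S E \<open>S \<subseteq> D\<close> \<phi>_nonzero by (intro Lp_negligible_null_sets[OF negl \<phi>]) auto
    then show ?thesis
      by simp
  qed
qed

lemma Lp_eq_multiple_on_atom:
  assumes D: "D \<in> sets M"
    and atom: "\<And>E. E \<in> sets M \<Longrightarrow> E \<subseteq> D \<Longrightarrow> Lp_negligible B M p E \<or> Lp_negligible B M p (D - E)"
    and \<phi>: "\<phi> \<in> Lp_space B M p" and \<phi>_nonzero: "\<not> (AE x in M. x \<in> D \<longrightarrow> \<phi> x = 0)"
    and g: "g \<in> Lp_space B M p"
  shows "\<exists>c. AE x in M. x \<in> D \<longrightarrow> g x = c * \<phi> x"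
proof -
  have \<phi>_meas: "\<phi> \<in> borel_measurable M" and g_meas: "g \<in> borel_measurable M"
    using \<phi> g by (auto simp: Lp_space_def)
  define S where "S = {x \<in> space M. x \<in> D \<and> \<phi> x \<noteq> 0}"
  have S: "S \<in> sets M"
    unfolding S_def using D \<phi>_meas by measurable
  have "S \<subseteq> D"
    by (auto simp: S_def)
  have "\<not> Lp_negligible B M p S"
  proof
    assume "Lp_negligible B M p S"
    then have "AE x in M. x \<in> S \<longrightarrow> \<phi> x = 0"
      using \<phi> by (simp add: Lp_negligible_def)
    then have "AE x in M. x \<in> D \<longrightarrow> \<phi> x = 0"
      by (auto simp: S_def elim!: eventually_mono[OF AE_space[THEN AE_conjI]] eventually_mono)
    then show False
      using \<phi>_nonzero by simp
  qed
  then have "Lp_negligible B M p (D - S)"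
    using atom[OF S \<open>S \<subseteq> D\<close>] by blast
  then have g_outside: "AE x in M. x \<in> D - S \<longrightarrow> g x = 0"
    using g by (simp add: Lp_negligible_def)
  define h where "h x = g x / \<phi> x" for x
  have h_meas: "h \<in> borel_measurable M"
    unfolding h_def using g_meas \<phi>_meas by measurable
  have "\<exists>c. AE x in M. x \<in> S \<longrightarrow> h x = c"
    by (rule AE_eq_const_on_atom[OF h_meas S \<open>S \<subseteq> D\<close> \<phi> _ atom]) (simp add: S_def)
  then obtain c where c: "AE x in M. x \<in> S \<longrightarrow> h x = c"
    by blast
  have "AE x in M. x \<in> D \<longrightarrow> g x = c * \<phi> x"
    using c g_outside AE_space
  proof eventually_elim
    case (elim x)
    then show ?case
      by (cases "\<phi> x = 0") (auto simp: S_def h_def)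
  qed
  then show ?thesis
    by blast
qed

lemma not_Lp_infinite_dim_if_spanned:
  fixes K :: nat
  assumes spanned: "\<And>g. g \<in> Lp_space B M p \<Longrightarrow> \<exists>c. AE x in M. g x = (\<Sum>i<K. c i * \<psi> i x)"
  shows "\<not> Lp_infinite_dim B M p"
proof
  assume "Lp_infinite_dim B M p"
  then obtain f where f: "\<And>m. m < Suc K \<Longrightarrow> f m \<in> Lp_space B M p"
    and independent: "\<And>c :: nat \<Rightarrow> 'b. (AE x in M. (\<Sum>m<Suc K. c m * f m x) = 0) \<Longrightarrow> \<forall>m<Suc K. c m = 0"
    unfolding Lp_infinite_dim_def by blast
  have "\<forall>m<Suc K. \<exists>c. AE x in M. f m x = (\<Sum>i<K. c i * \<psi> i x)"
    using spanned f by blast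
  then obtain a where a: "\<And>m. m < Suc K \<Longrightarrow> AE x in M. f m x = (\<Sum>i<K. a m i * \<psi> i x)"
    by metis
  obtain d where d: "\<exists>m\<in>{..<Suc K}. d m \<noteq> 0" "\<forall>i<K. (\<Sum>m\<in>{..<Suc K}. d m * a m i) = 0"
    using homogeneous_system_nontrivial_solution[of "{..<Suc K}" K a] by auto
  have "AE x in M. \<forall>m\<in>{..<Suc K}. f m x = (\<Sum>i<K. a m i * \<psi> i x)"
    using a by (intro AE_finite_allI) auto
  then have "AE x in M. (\<Sum>m<Suc K. d m * f m x) = 0"
  proof eventually_elim
    case (elim x)
    then have "(\<Sum>m<Suc K. d m * f m x) = (\<Sum>m<Suc K. \<Sum>i<K. d m * a m i * \<psi> i x)"
      by (simp add: sum_distrib_left mult.assoc)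
    also have "\<dots> = (\<Sum>i<K. \<Sum>m<Suc K. d m * a m i * \<psi> i x)"
      by (rule sum.swap)
    also have "\<dots> = (\<Sum>i<K. (\<Sum>m<Suc K. d m * a m i) * \<psi> i x)"
      by (simp only: sum_distrib_right)
    finally show ?case
      using d(2) by simp
  qed
  then show False
    using independent d(1) by blast
qed

lemma not_Lp_infinite_dim_if_atomic:
  fixes K :: nat
  assumes D: "\<And>i. i < K \<Longrightarrow> D i \<in> sets M" and disjoint: "disjoint_family_on D {..<K}"
    and non_negligible: "\<And>i. i < K \<Longrightarrow> \<not> Lp_negligible B M p (D i)"
    and atoms: "\<And>i E. i < K \<Longrightarrow> E \<in> sets M \<Longrightarrow> E \<subseteq> D i \<Longrightarrow>
      Lp_negligible B M p E \<or> Lp_negligible B M p (D i - E)"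
    and rest: "Lp_negligible B M p (space M - (\<Union>i<K. D i))"
  shows "\<not> Lp_infinite_dim B M p"
proof -
  have "\<forall>i<K. \<exists>\<phi>. \<phi> \<in> Lp_space B M p \<and> \<not> (AE x in M. x \<in> D i \<longrightarrow> \<phi> x = 0)"
    using non_negligible by (auto simp: Lp_negligible_def)
  then obtain \<phi> where \<phi>: "\<And>i. i < K \<Longrightarrow> \<phi> i \<in> Lp_space B M p"
    "\<And>i. i < K \<Longrightarrow> \<not> (AE x in M. x \<in> D i \<longrightarrow> \<phi> i x = 0)"
    by metis
  define \<psi> where "\<psi> i x = (if x \<in> D i then \<phi> i x else 0)" for i x
  show ?thesis
  proof (rule not_Lp_infinite_dim_if_spanned)
    fix g
    assume g: "g \<in> Lp_space B M p"
    have "\<forall>i<K. \<exists>c. AE x in M. x \<in> D i \<longrightarrow> g x = c * \<phi> i x"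
      using Lp_eq_multiple_on_atom[OF D atoms \<phi>(1) \<phi>(2) g] by blast
    then obtain c where "\<And>i. i < K \<Longrightarrow> AE x in M. x \<in> D i \<longrightarrow> g x = c i * \<phi> i x"
      by metis
    then have on_atoms: "AE x in M. \<forall>i\<in>{..<K}. x \<in> D i \<longrightarrow> g x = c i * \<phi> i x"
      by (intro AE_finite_allI) auto
    have off_atoms: "AE x in M. x \<in> space M - (\<Union>i<K. D i) \<longrightarrow> g x = 0"
      using rest g by (simp add: Lp_negligible_def)
    have "AE x in M. g x = (\<Sum>i<K. c i * \<psi> i x)"
      using on_atoms off_atoms AE_space
    proof eventually_elim
      case (elim x)
      show ?case
      proof (cases "\<exists>i<K. x \<in> D i")
        case True
        then obtain i where i: "i < K" "x \<in> D i"
          by blast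
        have "(\<Sum>j<K. c j * \<psi> j x) = (\<Sum>j<K. c j * \<phi> j x * indicator (D j) x)"
          by (intro sum.cong) (auto simp: \<psi>_def)
        also have "\<dots> = c i * \<phi> i x"
          using sum_indicator_disjoint_family[OF disjoint i(2)] i(1) by simp
        finally show ?thesis
          using elim i by simp
      next
        case False
        then show ?thesis
          using elim by (simp add: \<psi>_def)
      qed
    qed
    then show "\<exists>c. AE x in M. g x = (\<Sum>i<K. c i * \<psi> i x)"
      by blast
  qed
qed

lemma disjoint_family_on_lessThan_Suc:
  assumes "disjoint_family_on D {..<K}" and "\<And>i. i < K \<Longrightarrow> D i \<inter> C = {}"
  shows "disjoint_family_on (D(K := C)) {..<Suc K}"
  using assms unfolding disjoint_family_on_def by (auto simp: less_Suc_eq) blast+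

lemma disjoint_family_on_lessThan_Suc_split:
  assumes disjoint: "disjoint_family_on D {..<K}" and "i < K" and "E \<subseteq> D i"
  shows "disjoint_family_on ((D(i := E))(K := D i - E)) {..<Suc K}"
proof -
  have "disjoint_family_on (D(i := E)) {..<K}"
    using disjoint \<open>E \<subseteq> D i\<close> unfolding disjoint_family_on_def by (auto simp: fun_upd_def)
  then show ?thesis
  proof (rule disjoint_family_on_lessThan_Suc)
    fix j
    assume "j < K"
    then show "(D(i := E)) j \<inter> (D i - E) = {}"
      using disjoint \<open>i < K\<close> by (cases "j = i") (auto simp: disjoint_family_on_def)
  qed
qed

lemma disjoint_non_negligible_sets:
  fixes K :: nat
  assumes inf: "Lp_infinite_dim B M p"
  shows "\<exists>D. (\<forall>i<K. D i \<in> sets M \<and> \<not> Lp_negligible B M p (D i)) \<and> disjoint_family_on D {..<K}"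
proof (induction K)
  case 0
  show ?case
    by (auto simp: disjoint_family_on_def)
next
  case (Suc K)
  then obtain D where D: "\<And>i. i < K \<Longrightarrow> D i \<in> sets M" "\<And>i. i < K \<Longrightarrow> \<not> Lp_negligible B M p (D i)"
    and disjoint: "disjoint_family_on D {..<K}"
    by blast
  define C where "C = space M - (\<Union>i<K. D i)"
  have C: "C \<in> sets M"
    unfolding C_def using D(1) by auto
  consider "\<not> Lp_negligible B M p C"
    | i E where "i < K" "E \<in> sets M" "E \<subseteq> D i" "\<not> Lp_negligible B M p E" "\<not> Lp_negligible B M p (D i - E)"
    | "Lp_negligible B M p C"
      "\<And>i E. i < K \<Longrightarrow> E \<in> sets M \<Longrightarrow> E \<subseteq> D i \<Longrightarrow> Lp_negligible B M p E \<or> Lp_negligible B M p (D i - E)"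
    by blast
  then show ?case
  proof cases
    case 1
    have "disjoint_family_on (D(K := C)) {..<Suc K}"
      using disjoint by (rule disjoint_family_on_lessThan_Suc) (auto simp: C_def)
    moreover have "\<forall>i<Suc K. (D(K := C)) i \<in> sets M \<and> \<not> Lp_negligible B M p ((D(K := C)) i)"
      using D C 1 by (auto simp: less_Suc_eq)
    ultimately show ?thesis
      by blast
  next
    case (2 i E)
    have "disjoint_family_on ((D(i := E))(K := D i - E)) {..<Suc K}"
      using disjoint 2 by (intro disjoint_family_on_lessThan_Suc_split)
    moreover have "D i - E \<in> sets M"
      using D(1)[OF \<open>i < K\<close>] \<open>E \<in> sets M\<close> by auto
    then have "\<forall>j<Suc K. ((D(i := E))(K := D i - E)) j \<in> sets M \<and>
        \<not> Lp_negligible B M p (((D(i := E))(K := D i - E)) j)"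
      using D 2 by (auto simp: less_Suc_eq)
    ultimately show ?thesis
      by blast
  next
    case 3
    then show ?thesis
      using not_Lp_infinite_dim_if_atomic[OF D(1) disjoint D(2)] inf by (simp add: C_def)
  qed
qed

lemma exists_Lp_sphere_supported_on:
  assumes p: "0 < p" and A: "A \<in> sets M" and f: "f \<in> Lp_space B M p"
    and nonzero: "\<not> (AE x in M. x \<in> A \<longrightarrow> f x = 0)"
  obtains w where "w \<in> Lp_sphere B M p" "\<And>x. x \<notin> A \<Longrightarrow> w x = 0"
proof -
  define v where "v x = (if x \<in> A then f x else 0)" for x
  have v_meas: "v \<in> borel_measurable M"
    unfolding v_def using A Lp_spaceD(1)[OF f] by measurable
  have v_powr: "norm (v x) powr p = indicator A x * norm (f x) powr p" for x
    using p by (auto simp: v_def)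
  have v_int: "integrable M (\<lambda>x. norm (v x) powr p)"
    unfolding v_powr using A Lp_spaceD(2)[OF f] by (rule integrable_indicator_mult)
  have "0 < Lp_integral M p v"
  proof (rule ccontr)
    assume "\<not> ?thesis"
    then have "Lp_integral M p v = 0"
      using Lp_integral_nonneg[of M p v] by simp
    then have "AE x in M. norm (v x) powr p = 0"
      using integral_nonneg_eq_0_iff_AE[OF v_int] by (simp add: Lp_integral_def)
    then have "AE x in M. x \<in> A \<longrightarrow> f x = 0"
      by eventually_elim (auto simp: v_def)
    then show False
      using nonzero by simp
  qed
  define s where "s = Lp_integral M p v powr (- 1 / p)"
  have "s powr p = Lp_integral M p v powr (- 1)"
    using p by (simp add: s_def powr_powr)
  then have "s powr p * Lp_integral M p v = 1"
    using \<open>0 < Lp_integral M p v\<close> by (simp add: powr_minus)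
  define w where "w x = of_real s * v x" for x
  have w_powr: "norm (w x) powr p = s powr p * norm (v x) powr p" for x
    by (simp add: w_def s_def norm_mult powr_mult)
  have "w \<in> borel_measurable M"
    unfolding w_def using v_meas by measurable
  then have "w \<in> Lp_space B M p"
    using v_int by (simp add: Lp_space_def w_powr)
  moreover have "Lp_integral M p w = 1"
    using \<open>s powr p * Lp_integral M p v = 1\<close> by (simp add: Lp_integral_def w_powr)
  ultimately have "w \<in> Lp_sphere B M p"
    by (simp add: mem_Lp_sphere_iff[OF p])
  moreover have "w x = 0" if "x \<notin> A" for x
    using that by (simp add: w_def v_def)
  ultimately show thesis
    by (rule that)
qed

lemma disjoint_sphere_families_exist:
  fixes N :: nat
  assumes p: "0 < p" and inf: "Lp_infinite_dim B M p"
  shows "\<exists>w A. disjoint_sphere_family B M p N w A"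
proof -
  obtain D where D: "\<And>i. i < N \<Longrightarrow> D i \<in> sets M" "\<And>i. i < N \<Longrightarrow> \<not> Lp_negligible B M p (D i)"
    and disjoint: "disjoint_family_on D {..<N}"
    using disjoint_non_negligible_sets[OF inf, of N] by blast
  have "\<exists>w. w \<in> Lp_sphere B M p \<and> (\<forall>x. x \<notin> D i \<longrightarrow> w x = 0)" if i: "i < N" for i
  proof -
    obtain f where "f \<in> Lp_space B M p" "\<not> (AE x in M. x \<in> D i \<longrightarrow> f x = 0)"
      using D(2)[OF i] by (auto simp: Lp_negligible_def)
    then show ?thesis
      using exists_Lp_sphere_supported_on[OF p D(1)[OF i]] by metis
  qed
  then obtain w where "\<And>i. i < N \<Longrightarrow> w i \<in> Lp_sphere B M p \<and> (\<forall>x. x \<notin> D i \<longrightarrow> w i x = 0)"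
    by metis
  then have "disjoint_sphere_family B M p N w D"
    using p D(1) disjoint by unfold_locales auto
  then show ?thesis
    by blast
qed

theorem theorem4p1:
  fixes M :: "'a measure" and p :: real
  assumes "0 < p"
    and "Lp_infinite_dim TYPE('b::{real_normed_field,banach,second_countable_topology}) M p"
  shows "average_set TYPE('b) M p = {2 powr (1 / p)}
         \<and> rendezvous_set TYPE('b) M p = {2 powr (1 / p)}"
proof -
  have families: "\<And>N. \<exists>w A. disjoint_sphere_family TYPE('b) M p N w A"
    by (rule disjoint_sphere_families_exist[OF assms])
  show ?thesis
    using average_set_eq[OF assms(1) families] rendezvous_set_eq[OF assms(1) families] by simp
qed

end
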